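(* Let $\mathfrak{g}$ be a Lie algebra and $\beta\in\mathbb{C}$. Let $R_{J,I,E,F}$ be the $\mathbb{C}[\partial]$-module $\mathbb{C}[\partial]\otimes(\mathfrak{g}\ltimes\mathfrak{g}_{\mathrm{ad}})[u,v]\ \oplus\ \mathbb{C}[\partial]\otimes\big(\mathfrak{h}[u,v]/\mathbb{C}E[0,0]\big)$, where $\mathfrak{h}=\mathrm{span}\{E,F\}$ is a two-dimensional abelian Lie algebra, equipped with the $\lambda$-bracket (extended by sesquilinearity) given on generators by \begin{align*} &[J_a[m,n]_\lambda J_b[t,s]]=J_{[a,b]}[m+t,n+s],\quad [J_a[m,n]_\lambda I_b[t,s]]=I_{[a,b]}[m+t,n+s],\quad [I_a[m,n]_\lambda I_b[t,s]]=0,\\ &[J_a[m,n]_\lambda E[t,s]]=\beta\frac{sm-tn}{t+s}I_a[m+t-1,n+s-1],\\ &[J_a[m,n]_\lambda F[t,s]]=-\beta\Big(\lambda+\frac{m+n}{t+s+2}(\lambda+\partial)\Big)I_a[m+t,n+s], \end{align*} all brackets among the $I$, $E$, $F$ generators being zero, and the remaining brackets defined by skew-symmetry $[x_\lambda y]=-[y_{-\lambda-\partial}x]$. Then $R_{J,I,E,F}$ is a Lie conformal algebra.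
   Context: $\mathfrak{g}\ltimes\mathfrak{g}_{\mathrm{ad}}$ is the Lie algebra of pairs $(a,x)$ with bracket $[(a,x),(b,y)]=([a,b],[a,y]-[b,x])$; for a Lie algebra $L$, $L[u,v]=L\otimes\mathbb{C}[u,v]$ with bracket $[x\otimes f,y\otimes g]=[x,y]\otimes fg$. Notation: $J_a[m,n]=(a,0)\otimes u^mv^n$, $I_a[m,n]=(0,a)\otimes u^mv^n$, $E[m,n]=E\otimes u^mv^n$, $F[m,n]=F\otimes u^mv^n$ for $m,n\ge0$ (and $E[0,0]$ is set to $0$). A Lie conformal algebra is a $\mathbb{C}[\partial]$-module $R$ with a bilinear map $[\cdot_\lambda\cdot]:R\otimes R\to R[\lambda]$ satisfying sesquilinearity $[\partial a_\lambda b]=-\lambda[a_\lambda b]$, $[a_\lambda\partial b]=(\lambda+\partial)[a_\lambda b]$, skew-symmetry $[a_\lambda b]=-[b_{-\lambda-\partial}a]$, and the Jacobi identity $[a_\lambda[b_\mu c]]=[b_\mu[a_\lambda c]]+[[a_\lambda b]_{\lambda+\mu}c]$. *)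

theory Defs
  imports Complex_Main "HOL-Library.Function_Algebras" "HOL-Library.Product_Plus"
begin

definition complex_lie_algebra ::
  "(complex \<Rightarrow> 'a::ab_group_add \<Rightarrow> 'a) \<Rightarrow> ('a \<Rightarrow> 'a \<Rightarrow> 'a) \<Rightarrow> bool" where
  "complex_lie_algebra sm br \<longleftrightarrow>
     vector_space sm
   \<and> (\<forall>x y z. br (x + y) z = br x z + br y z)
   \<and> (\<forall>x y z. br x (y + z) = br x y + br x z)
   \<and> (\<forall>c x y. br (sm c x) y = sm c (br x y))
   \<and> (\<forall>c x y. br x (sm c y) = sm c (br x y))
   \<and> (\<forall>x. br x x = 0)
   \<and> (\<forall>x y z. br x (br y z) + br y (br z x) + br z (br x y) = 0)"

text \<open>The module is the subset C of the
  additive group 'r, with complex scaling sc and the action of d given by D.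
  The lambda-bracket is given by its coefficients: lb a b j is the coefficient of
  lambda^j in [a_lambda b], an element of C[lambda] (finitely many nonzero coefficients).
  Skew-symmetry: substituting lambda := -lambda - d into sum_i lambda^i c_i gives
  sum_i (-lambda-d)^i c_i, whose lambda^j coefficient is
  sum_i (-1)^i (i choose j) d^(i-j) c_i.
  Jacobi identity: compare coefficients of lambda^p mu^q; the term
  [[a_lambda b]_(lambda+mu) c] = sum_j sum_r lambda^j (lambda+mu)^r lb (lb a b j) c r
  has lambda^p mu^q coefficient sum_(j<=p) ((p+q-j) choose q) lb (lb a b j) c (p+q-j).\<close>

definition lie_conformal_algebra ::
  "'r::ab_group_add set \<Rightarrow> (complex \<Rightarrow> 'r \<Rightarrow> 'r) \<Rightarrow> ('r \<Rightarrow> 'r) \<Rightarrow> ('r \<Rightarrow> 'r \<Rightarrow> nat \<Rightarrow> 'r) \<Rightarrow> bool"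
  where
  "lie_conformal_algebra C sc D lb \<longleftrightarrow>
     \<comment> \<open>C is a complex vector space and D is a linear endomorphism (C[d]-module)\<close>
     vector_space sc \<and> 0 \<in> C \<and> (\<forall>a\<in>C. \<forall>b\<in>C. a + b \<in> C) \<and> (\<forall>z. \<forall>a\<in>C. sc z a \<in> C)
   \<and> (\<forall>a\<in>C. D a \<in> C) \<and> (\<forall>a\<in>C. \<forall>b\<in>C. D (a + b) = D a + D b)
   \<and> (\<forall>z. \<forall>a\<in>C. D (sc z a) = sc z (D a))
     \<comment> \<open>the lambda-bracket takes values in C[lambda]\<close>
   \<and> (\<forall>a\<in>C. \<forall>b\<in>C. (\<forall>j. lb a b j \<in> C) \<and> finite {j. lb a b j \<noteq> 0})
     \<comment> \<open>bilinearity\<close>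
   \<and> (\<forall>a\<in>C. \<forall>b\<in>C. \<forall>c\<in>C. \<forall>j.
        lb (a + b) c j = lb a c j + lb b c j \<and> lb a (b + c) j = lb a b j + lb a c j)
   \<and> (\<forall>z. \<forall>a\<in>C. \<forall>b\<in>C. \<forall>j. lb (sc z a) b j = sc z (lb a b j) \<and> lb a (sc z b) j = sc z (lb a b j))
     \<comment> \<open>sesquilinearity: [d a_lambda b] = -lambda [a_lambda b]\<close>
   \<and> (\<forall>a\<in>C. \<forall>b\<in>C. lb (D a) b 0 = 0 \<and> (\<forall>j. lb (D a) b (Suc j) = - lb a b j))
     \<comment> \<open>sesquilinearity: [a_lambda d b] = (lambda + d) [a_lambda b]\<close>
   \<and> (\<forall>a\<in>C. \<forall>b\<in>C. lb a (D b) 0 = D (lb a b 0)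
        \<and> (\<forall>j. lb a (D b) (Suc j) = lb a b j + D (lb a b (Suc j))))
     \<comment> \<open>skew-symmetry: [a_lambda b] = - [b_(-lambda-d) a]\<close>
   \<and> (\<forall>a\<in>C. \<forall>b\<in>C. \<forall>j. lb a b j =
        - (\<Sum>i\<in>{i. lb b a i \<noteq> 0}. sc ((-1) ^ i * of_nat (i choose j)) ((D ^^ (i - j)) (lb b a i))))
     \<comment> \<open>Jacobi identity\<close>
   \<and> (\<forall>a\<in>C. \<forall>b\<in>C. \<forall>c\<in>C. \<forall>p q.
        lb a (lb b c q) p = lb b (lb a c p) q
          + (\<Sum>j\<le>p. sc (of_nat ((p + q - j) choose q)) (lb (lb a b j) c (p + q - j))))"

text \<open>A component ('J-part', 'I-part', 'E-coefficient', 'F-coefficient') in g x g x C x C.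
  An element r of R is a finitely supported function with r k m n the component of
  d^k (generator at [m,n]), i.e. r = sum d^k (J_{xJ}[m,n] + I_{xI}[m,n] + xE E[m,n] + xF F[m,n]).
  The quotient by C E[0,0] is realised by requiring the E-coefficient at [0,0] to vanish.\<close>

type_synonym 'a gcomp = "'a \<times> 'a \<times> complex \<times> complex"
type_synonym 'a Relt = "nat \<Rightarrow> nat \<Rightarrow> nat \<Rightarrow> 'a gcomp"

definition cJ :: "'a gcomp \<Rightarrow> 'a" where "cJ x = fst x"
definition cI :: "'a gcomp \<Rightarrow> 'a" where "cI x = fst (snd x)"
definition cE :: "'a gcomp \<Rightarrow> complex" where "cE x = fst (snd (snd x))"
definition cF :: "'a gcomp \<Rightarrow> complex" where "cF x = snd (snd (snd x))"

definition csc :: "(complex \<Rightarrow> 'a \<Rightarrow> 'a) \<Rightarrow> complex \<Rightarrow> 'a gcomp \<Rightarrow> 'a gcomp" where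
  "csc sm z x = (sm z (cJ x), sm z (cI x), z * cE x, z * cF x)"

definition R_carrier :: "('a::zero) Relt set" where
  "R_carrier = {r. finite {(k, m, n). r k m n \<noteq> 0} \<and> (\<forall>k. cE (r k 0 0) = 0)}"

definition R_sc :: "(complex \<Rightarrow> 'a \<Rightarrow> 'a) \<Rightarrow> complex \<Rightarrow> 'a Relt \<Rightarrow> 'a Relt" where
  "R_sc sm z r = (\<lambda>k m n. csc sm z (r k m n))"

definition R_D :: "('a::zero) Relt \<Rightarrow> 'a Relt" where
  "R_D r = (\<lambda>k m n. case k of 0 \<Rightarrow> 0 | Suc k' \<Rightarrow> r k' m n)"

text \<open>Elements of R[lambda] = C[lambda,d] (x) generators: P j k p q is the component of
  lambda^j d^k (generator at [p,q]).\<close>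

definition lmono :: "nat \<Rightarrow> nat \<Rightarrow> nat \<Rightarrow> nat \<Rightarrow> ('a::zero) gcomp \<Rightarrow> nat \<Rightarrow> 'a Relt" where
  "lmono j k p q c = (\<lambda>j' k' p' q'. if j' = j \<and> k' = k \<and> p' = p \<and> q' = q then c else 0)"

text \<open>Multiplication by the monomial c lambda^j0 d^k0.\<close>
definition lshift :: "(complex \<Rightarrow> 'a \<Rightarrow> 'a) \<Rightarrow> complex \<Rightarrow> nat \<Rightarrow> nat \<Rightarrow> (nat \<Rightarrow> ('a::zero) Relt) \<Rightarrow> nat \<Rightarrow> 'a Relt"
  where
  "lshift sm c j0 k0 P = (\<lambda>j k p q. if j0 \<le> j \<and> k0 \<le> k then csc sm c (P (j - j0) (k - k0) p q) else 0)"

text \<open>The brackets with J on the left are as given;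
  those with J on the right are obtained by skew-symmetry:
  [I_a _lambda J_b] = -I_{[b,a]},
  [E[m,n] _lambda J_b[t,s]] = -beta (n t - m s)/(m+n) I_b[m+t-1,n+s-1],
  [F[m,n] _lambda J_b[t,s]] = beta (-lambda - d - (t+s)/(m+n+2) lambda) I_b[m+t,n+s].
  (When m+t = 0 or n+s = 0 the coefficients of the [m+t-1,n+s-1] terms vanish.)\<close>

definition gen_br :: "(complex \<Rightarrow> 'a::ab_group_add \<Rightarrow> 'a) \<Rightarrow> ('a \<Rightarrow> 'a \<Rightarrow> 'a) \<Rightarrow> complex \<Rightarrow>
    'a gcomp \<Rightarrow> nat \<Rightarrow> nat \<Rightarrow> 'a gcomp \<Rightarrow> nat \<Rightarrow> nat \<Rightarrow> nat \<Rightarrow> 'a Relt" where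
  "gen_br sm br \<beta> x m n y t s =
    (let M = (of_nat (m + n) :: complex); T = (of_nat (t + s) :: complex) in
       lmono 0 0 (m + t) (n + s)
         (br (cJ x) (cJ y), br (cJ x) (cI y) - br (cJ y) (cI x), 0, 0)
     + lmono 1 0 (m + t) (n + s)
         (0, sm (- \<beta> * cF y * (1 + M / (T + 2))) (cJ x)
             + sm (\<beta> * cF x * (- 1 - T / (M + 2))) (cJ y), 0, 0)
     + lmono 0 1 (m + t) (n + s)
         (0, sm (- \<beta> * cF y * (M / (T + 2))) (cJ x)
             + sm (- \<beta> * cF x) (cJ y), 0, 0)
     + lmono 0 0 (m + t - 1) (n + s - 1)
         (0, sm (\<beta> * cE y * ((of_nat (s * m) - of_nat (t * n)) / T)) (cJ x)
             - sm (\<beta> * cE x * ((of_nat (n * t) - of_nat (m * s)) / M)) (cJ y), 0, 0))"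

text \<open>The lambda-bracket on R, extended by sesquilinearity and bilinearity:
  [d^K x _lambda d^L y] = (-lambda)^K (lambda+d)^L [x _lambda y]
  with (-lambda)^K (lambda+d)^L = sum_(i<=L) (-1)^K (L choose i) lambda^(K+i) d^(L-i).
  R_br sm br beta a b j is the coefficient of lambda^j.\<close>

definition R_br :: "(complex \<Rightarrow> 'a::ab_group_add \<Rightarrow> 'a) \<Rightarrow> ('a \<Rightarrow> 'a \<Rightarrow> 'a) \<Rightarrow> complex \<Rightarrow>
    'a Relt \<Rightarrow> 'a Relt \<Rightarrow> nat \<Rightarrow> 'a Relt" where
  "R_br sm br \<beta> a b =
    (\<Sum>(K, m, n)\<in>{(K, m, n). a K m n \<noteq> 0}. \<Sum>(L, t, s)\<in>{(L, t, s). b L t s \<noteq> 0}. \<Sum>i\<le>L.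
       lshift sm ((-1) ^ K * of_nat (L choose i)) (K + i) (L - i)
         (gen_br sm br \<beta> (a K m n) m n (b L t s) t s))"

end

theory Submission
  imports Defs
begin

text \<open>
  Evaluating the formal variables \<open>\<lambda>\<close> and \<open>\<partial>\<close> at complex numbers \<open>l\<close> and \<open>d\<close> maps an element of
  \<open>R[\<lambda>]\<close> to the loop space \<open>W = (g \<times> g \<times> \<complex> \<times> \<complex>)[u, v]\<close>, and an element with bounded support is
  determined by these values, since a polynomial with vector coefficients over a field of
  characteristic 0 that vanishes everywhere has zero coefficients.  Sesquilinearity is built into the
  evaluation: at \<open>(l, d)\<close> the bracket \<open>[a\<^sub>\<lambda> b]\<close> becomes \<open>uv_lbr (a(-l)) (b(l + d)) l d\<close>, where \<open>a(z)\<close>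
  substitutes \<open>z\<close> for \<open>\<partial>\<close> and \<open>uv_lbr\<close> is a bilinear operation on \<open>W\<close>.  So every axiom becomes an
  identity for \<open>uv_lbr\<close>, which by bilinearity reduces to generators.  There skew-symmetry is
  immediate, and the Jacobi identity splits into a component of top degree in \<open>(u, v)\<close> and one of
  degree one lower.  The first is the Jacobi identity of the semidirect product of \<open>g\<close> with \<open>g_ad\<close>
  combined with an additivity of the coefficient of \<open>[J_a[m, n]\<^sub>\<lambda> F[t, s]]\<close> in \<open>(m + n, \<lambda>)\<close>
  (\<open>F_coeff_add\<close>); the second uses that the coefficient of \<open>[J_a[m, n]\<^sub>\<lambda> E[t, s]]\<close> is additive in
  \<open>(m, n)\<close> (\<open>E_coeff_add\<close>).
\<close>

section \<open>Polynomials with vector coefficients\<close>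

lemma sum_apply: "sum f A x = (\<Sum>i\<in>A. f i x)"
  by (induct A rule: infinite_finite_induct) auto

definition vec_poly :: "('a::monoid_mult \<Rightarrow> 'b \<Rightarrow> 'b) \<Rightarrow> nat \<Rightarrow> (nat \<Rightarrow> 'b::comm_monoid_add) \<Rightarrow> 'a \<Rightarrow> 'b"
  where "vec_poly scale n c x = (\<Sum>k<n. scale (x ^ k) (c k))"

context vector_space
begin

lemma vec_poly_add: "vec_poly scale n (\<lambda>k. c k + c' k) x = vec_poly scale n c x + vec_poly scale n c' x"
  by (simp add: vec_poly_def scale_right_distrib sum.distrib)

lemma vec_poly_diff: "vec_poly scale n (\<lambda>k. c k - c' k) x = vec_poly scale n c x - vec_poly scale n c' x"
  by (simp add: vec_poly_def scale_right_diff_distrib sum_subtractf)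

lemma vec_poly_uminus: "vec_poly scale n (\<lambda>k. - c k) x = - vec_poly scale n c x"
  by (simp add: vec_poly_def sum_negf)

lemma vec_poly_sum: "vec_poly scale n (\<lambda>k. \<Sum>i\<in>A. c i k) x = (\<Sum>i\<in>A. vec_poly scale n (c i) x)"
  unfolding vec_poly_def scale_sum_right by (rule sum.swap)

lemma vec_poly_sum_fun: "vec_poly scale n (\<Sum>i\<in>A. c i) x = (\<Sum>i\<in>A. vec_poly scale n (c i) x)"
proof -
  have "(\<Sum>i\<in>A. c i) = (\<lambda>k. \<Sum>i\<in>A. c i k)"
    by (rule ext) (rule sum_apply)
  then show ?thesis
    by (simp add: vec_poly_sum)
qed

lemma vec_poly_scale: "vec_poly scale n (\<lambda>k. scale a (c k)) x = scale a (vec_poly scale n c x)"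
  by (simp add: vec_poly_def scale_sum_right mult.commute)

lemma vec_poly_zero [simp]: "vec_poly scale n (\<lambda>k. 0) x = 0" "vec_poly scale n 0 x = 0"
  by (simp_all add: vec_poly_def)

lemma vec_poly_extend:
  assumes "\<And>k. n \<le> k \<Longrightarrow> c k = 0" and "n \<le> n'"
  shows "vec_poly scale n' c x = vec_poly scale n c x"
  unfolding vec_poly_def by (rule sum.mono_neutral_right) (use assms in auto)

lemma vec_poly_mult_var:
  "vec_poly scale (Suc n) (\<lambda>k. case k of 0 \<Rightarrow> 0 | Suc k \<Rightarrow> c k) x = scale x (vec_poly scale n c x)"
  unfolding vec_poly_def sum.lessThan_Suc_shift by (simp add: scale_sum_right)

lemma vec_poly_shift:
  assumes "k0 + n \<le> M" and "\<And>k. n \<le> k \<Longrightarrow> c k = 0"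
  shows "vec_poly scale M (\<lambda>k. if k0 \<le> k then c (k - k0) else 0) x = scale (x ^ k0) (vec_poly scale n c x)"
proof -
  have "vec_poly scale M (\<lambda>k. if k0 \<le> k then c (k - k0) else 0) x = (\<Sum>k\<in>{k0..<M}. scale (x ^ k) (c (k - k0)))"
    unfolding vec_poly_def by (rule sum.mono_neutral_cong_right) auto
  also have "\<dots> = (\<Sum>k<M - k0. scale (x ^ (k + k0)) (c k))"
    using sum.shift_bounds_nat_ivl[of "\<lambda>k. scale (x ^ k) (c (k - k0))" 0 k0 "M - k0"] assms(1)
    by (simp add: lessThan_atLeast0)
  also have "\<dots> = scale (x ^ k0) (vec_poly scale (M - k0) c x)"
    by (simp add: vec_poly_def scale_sum_right power_add mult.commute)
  also have "vec_poly scale (M - k0) c x = vec_poly scale n c x"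
    by (rule vec_poly_extend) (use assms in auto)
  finally show ?thesis .
qed

lemma vec_poly_swap:
  "vec_poly scale n (\<lambda>p. vec_poly scale m (\<lambda>q. c p q) y) x = vec_poly scale m (\<lambda>q. vec_poly scale n (\<lambda>p. c p q) x) y"
  unfolding vec_poly_def scale_sum_right scale_scale by (subst sum.swap) (simp add: mult.commute)

text \<open>Collecting the coefficient of \<open>x ^ p * y ^ q\<close> in \<open>\<Sum>j. x ^ j * \<Sum>r. (x + y) ^ r * w j r\<close>.\<close>

lemma binomial_reindex:
  assumes w: "\<And>j r. w j r \<noteq> 0 \<Longrightarrow> j < A \<and> r < A" and M: "2 * A \<le> M"
  shows "(\<Sum>p<M. \<Sum>q<M. \<Sum>j\<le>p. scale (x ^ p * y ^ q * of_nat ((p + q - j) choose q)) (w j (p + q - j)))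
    = (\<Sum>j<A. \<Sum>r<A. scale (x ^ j * (x + y) ^ r) (w j r))"
proof -
  define F where "F = (\<lambda>(p, q, j). scale (x ^ p * y ^ q * of_nat ((p + q - j) choose q)) (w j (p + q - j)))"
  define G where "G = (\<lambda>(j, r, q). scale (x ^ j * (of_nat (r choose q) * y ^ q * x ^ (r - q))) (w j r))"
  define S where "S = (SIGMA p:{..<M}. {..<M} \<times> {..p})"
  define T where "T = (SIGMA j:{..<A}. SIGMA r:{..<A}. {..r})"
  have "(\<Sum>p<M. \<Sum>q<M. \<Sum>j\<le>p. scale (x ^ p * y ^ q * of_nat ((p + q - j) choose q)) (w j (p + q - j)))
      = sum F S"
    unfolding S_def F_def by (subst sum.Sigma[symmetric]) (auto simp: sum.cartesian_product split_def)
  also have "\<dots> = sum F {(p, q, j) \<in> S. j < A \<and> p + q - j < A}"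
    by (rule sum.mono_neutral_right) (auto simp: S_def F_def dest: w)
  also have "\<dots> = sum G T"
  proof (rule sum.reindex_bij_witness[where i = "\<lambda>(j, r, q). (j + r - q, q, j)" and j = "\<lambda>(p, q, j). (j, p + q - j, q)"])
    fix y
    assume "y \<in> T"
    then show "(case case y of (j, r, q) \<Rightarrow> (j + r - q, q, j) of (p, q, j) \<Rightarrow> (j, p + q - j, q)) = y"
      and "(case y of (j, r, q) \<Rightarrow> (j + r - q, q, j)) \<in> {(p, q, j) \<in> S. j < A \<and> p + q - j < A}"
      using M by (auto simp: T_def S_def)
  next
    fix z
    assume "z \<in> {(p, q, j) \<in> S. j < A \<and> p + q - j < A}"
    then obtain p q j where z: "z = (p, q, j)" and "j \<le> p" "j < A" "p + q - j < A"
      by (auto simp: S_def)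
    then have "x ^ j * x ^ (p + q - j - q) = x ^ p"
      by (simp flip: power_add)
    then show "G (case z of (p, q, j) \<Rightarrow> (j, p + q - j, q)) = F z"
      by (simp add: z F_def G_def mult_ac)
    show "(case case z of (p, q, j) \<Rightarrow> (j, p + q - j, q) of (j, r, q) \<Rightarrow> (j + r - q, q, j)) = z"
      and "(case z of (p, q, j) \<Rightarrow> (j, p + q - j, q)) \<in> T"
      using z \<open>j \<le> p\<close> \<open>j < A\<close> \<open>p + q - j < A\<close> by (auto simp: T_def)
  qed
  also have "\<dots> = (\<Sum>j<A. \<Sum>r<A. \<Sum>q\<le>r. scale (x ^ j * (of_nat (r choose q) * y ^ q * x ^ (r - q))) (w j r))"
    unfolding T_def G_def
    by (subst sum.Sigma[symmetric]; simp; intro sum.cong refl; subst sum.Sigma[symmetric]) auto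
  also have "\<dots> = (\<Sum>j<A. \<Sum>r<A. scale (x ^ j * (x + y) ^ r) (w j r))"
  proof -
    have "(x + y) ^ r = (\<Sum>q\<le>r. of_nat (r choose q) * y ^ q * x ^ (r - q))" for r
      by (subst add.commute) (rule binomial_ring)
    then show ?thesis
      by (simp add: scale_sum_left[symmetric] sum_distrib_left)
  qed
  finally show ?thesis .
qed

end

lemma vec_poly_coeff_eq_0:
  fixes scale :: "'a::field_char_0 \<Rightarrow> 'b::ab_group_add \<Rightarrow> 'b"
  assumes vs: "vector_space scale" and zero: "\<And>x. vec_poly scale n c x = 0" and "k < n"
  shows "c k = 0"
  using zero \<open>k < n\<close>
proof (induction n arbitrary: c k)
  case 0
  then show ?case by simp
next
  case (Suc n)
  interpret vector_space scale by (rule vs)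
  define c' where "c' k = scale (2 ^ k - 2 ^ n) (c k)" for k
  \<comment> \<open>Comparing the values at 2 x and x kills the top coefficient.\<close>
  have "vec_poly scale n c' x = vec_poly scale (Suc n) c (2 * x) - scale (2 ^ n) (vec_poly scale (Suc n) c x)" for x
    by (simp add: vec_poly_def c'_def scale_sum_right sum_subtractf[symmetric] scale_left_diff_distrib
        power_mult_distrib algebra_simps)
  then have "c' k = 0" if "k < n" for k
    using Suc.IH[of c' k] Suc.prems(1) that by simp
  moreover have "(2::'a) ^ k \<noteq> 2 ^ n" if "k < n" for k
    using that of_nat_eq_iff[of "2 ^ k" "2 ^ n", where 'a = 'a] by simp
  ultimately have low: "c k = 0" if "k < n" for k
    using that by (simp add: c'_def)
  have "c n = vec_poly scale (Suc n) c 1"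
    by (simp add: vec_poly_def low)
  then have "c n = 0"
    using Suc.prems(1) by simp
  with low Suc.prems(2) show ?case
    by (cases "k = n") auto
qed

lemma vec_poly_coeff_eq:
  fixes scale :: "'a::field_char_0 \<Rightarrow> 'b::ab_group_add \<Rightarrow> 'b"
  assumes "vector_space scale" and "\<And>x. vec_poly scale n c x = vec_poly scale n c' x" and "k < n"
  shows "c k = c' k"
proof -
  interpret vector_space scale by fact
  have "c k - c' k = 0"
    by (rule vec_poly_coeff_eq_0[OF assms(1) _ assms(3)]) (simp add: vec_poly_diff assms(2))
  then show ?thesis by simp
qed

lemma binomial_minus_power_mult:
  fixes l d :: "'a::comm_ring_1"
  shows "(- l) ^ K * (l + d) ^ L = (\<Sum>i\<le>L. (-1) ^ K * of_nat (L choose i) * l ^ (K + i) * d ^ (L - i))"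
  unfolding binomial_ring[of l d L] sum_distrib_left power_minus[of l K]
  by (rule sum.cong) (simp_all add: power_add algebra_simps)

lemma binomial_minus_sum:
  fixes l d :: "'a::comm_ring_1"
  shows "(- l - d) ^ i = (\<Sum>j\<le>i. (-1) ^ i * of_nat (i choose j) * l ^ j * d ^ (i - j))"
proof -
  have "(- l - d) ^ i = (-1) ^ i * (l + d) ^ i"
    by (simp flip: power_mult_distrib)
  then show ?thesis
    by (simp add: binomial_ring sum_distrib_left mult.assoc)
qed

lemma sum_triple_split:
  "(\<Sum>(K, m, n)\<in>A \<times> B. f K m n) = (\<Sum>K\<in>A. \<Sum>p\<in>B. f K (fst p) (snd p))"
  by (simp add: sum.cartesian_product split_def)

lemma sum_delta4:
  fixes g :: "nat \<Rightarrow> nat \<Rightarrow> nat \<Rightarrow> nat \<Rightarrow> 'b::comm_monoid_add"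
  assumes "finite A" "finite B" "finite C" "finite D"
  shows "(\<Sum>m\<in>A. \<Sum>n\<in>B. \<Sum>t\<in>C. \<Sum>s\<in>D. if m = i \<and> n = j \<and> t = k \<and> s = r then g m n t s else 0)
    = (if i \<in> A \<and> j \<in> B \<and> k \<in> C \<and> r \<in> D then g i j k r else 0)"
proof -
  have if_const: "(\<Sum>x\<in>S. if P then f x else 0) = (if P then sum f S else 0)" for S P and f :: "nat \<Rightarrow> 'b"
    by simp
  have "\<And>m n t s. (if m = i \<and> n = j \<and> t = k \<and> s = r then g m n t s else 0)
     = (if m = i then if n = j then if t = k then if s = r then g m n t s else 0 else 0 else 0 else 0)"
    by auto
  then show ?thesis
    using assms by (simp add: if_const)
qed

section \<open>Bounded elements of R\<close>

lemma gcomp_eqI: "cJ x = cJ y \<Longrightarrow> cI x = cI y \<Longrightarrow> cE x = cE y \<Longrightarrow> cF x = cF y \<Longrightarrow> x = y"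
  by (cases x; cases y) (simp add: cJ_def cI_def cE_def cF_def)

lemma gcomp_simps [simp]:
  "cJ (a, b, c, d) = a" "cI (a, b, c, d) = b" "cE (a, b, c, d) = c" "cF (a, b, c, d) = d"
  "cJ (x + y) = cJ x + cJ y" "cI (x + y) = cI x + cI y" "cE (x + y) = cE x + cE y" "cF (x + y) = cF x + cF y"
  "cJ (x - y) = cJ x - cJ y" "cI (x - y) = cI x - cI y" "cE (x - y) = cE x - cE y" "cF (x - y) = cF x - cF y"
  "cJ (- x) = - cJ x" "cI (- x) = - cI x" "cE (- x) = - cE x" "cF (- x) = - cF x"
  "cJ 0 = 0" "cI 0 = 0" "cE 0 = 0" "cF 0 = 0"
  by (simp_all add: cJ_def cI_def cE_def cF_def)

lemma gcomp_zero: "((0::'a::zero), (0::'a), (0::complex), (0::complex)) = 0"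
  by (simp add: zero_prod_def)

type_synonym 'a uv = "nat \<Rightarrow> nat \<Rightarrow> 'a gcomp"

definition uv_mono :: "nat \<Rightarrow> nat \<Rightarrow> 'a::zero gcomp \<Rightarrow> 'a uv" where
  "uv_mono i j v = (\<lambda>p q. if p = i \<and> q = j then v else 0)"

lemma uv_mono_add: "uv_mono i j v + uv_mono i j w = uv_mono i j (v + w :: 'a::ab_group_add gcomp)"
  and uv_mono_zero [simp]: "uv_mono i j 0 = 0"
  and uv_mono_uminus: "uv_mono i j (- v) = - uv_mono i j v"
  by (simp_all add: uv_mono_def fun_eq_iff)

definition uv_bounded :: "nat \<Rightarrow> 'a::zero uv \<Rightarrow> bool" where
  "uv_bounded N u \<longleftrightarrow> (\<forall>m n. u m n \<noteq> 0 \<longrightarrow> m < N \<and> n < N)"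

definition R_bounded :: "nat \<Rightarrow> 'a::zero Relt \<Rightarrow> bool" where
  "R_bounded N r \<longleftrightarrow> (\<forall>k m n. r k m n \<noteq> 0 \<longrightarrow> k < N \<and> m < N \<and> n < N)"

definition lam_D_bounded :: "nat \<Rightarrow> (nat \<Rightarrow> 'a::zero Relt) \<Rightarrow> bool" where
  "lam_D_bounded M P \<longleftrightarrow> (\<forall>j k. P j k \<noteq> 0 \<longrightarrow> j < M \<and> k < M)"

lemma R_bounded_mono: "R_bounded N r \<Longrightarrow> N \<le> N' \<Longrightarrow> R_bounded N' r"
  by (fastforce simp: R_bounded_def)

lemma R_bounded_eq_0: "R_bounded N r \<Longrightarrow> N \<le> k \<Longrightarrow> r k = 0"
  by (fastforce simp: R_bounded_def fun_eq_iff)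

lemma R_bounded_uv_bounded: "R_bounded N r \<Longrightarrow> uv_bounded N (r k)"
  by (simp add: R_bounded_def uv_bounded_def)

lemma R_bounded_add:
  fixes r r' :: "'a::monoid_add Relt"
  shows "R_bounded N r \<Longrightarrow> R_bounded N r' \<Longrightarrow> R_bounded N (r + r')"
  unfolding R_bounded_def plus_fun_apply by (metis add.right_neutral add_0)

lemma R_bounded_R_D:
  assumes "R_bounded N r"
  shows "R_bounded (Suc N) (R_D r)"
  unfolding R_bounded_def
proof (intro allI impI)
  fix k m n
  assume "R_D r k m n \<noteq> 0"
  then obtain k' where "k = Suc k'" and "r k' m n \<noteq> 0"
    by (cases k) (auto simp: R_D_def)
  moreover have "k' < N \<and> m < N \<and> n < N" if "r k' m n \<noteq> 0"
    using assms that unfolding R_bounded_def by blast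
  ultimately show "k < Suc N \<and> m < Suc N \<and> n < Suc N"
    by simp
qed

lemma R_carrier_bounded:
  assumes "r \<in> R_carrier"
  shows "\<exists>N. R_bounded N r"
proof -
  let ?S = "{(k, m, n). r k m n \<noteq> 0}"
  have "finite ((\<lambda>(k, m, n). max k (max m n)) ` ?S)"
    using assms by (simp add: R_carrier_def)
  then obtain N where "\<forall>x\<in>(\<lambda>(k, m, n). max k (max m n)) ` ?S. x < N"
    by (meson finite_nat_set_iff_bounded)
  then have "R_bounded N r"
    unfolding R_bounded_def by (auto 0 3)
  then show ?thesis ..
qed

lemma R_carrier_iff: "r \<in> R_carrier \<longleftrightarrow> (\<exists>N. R_bounded N r) \<and> (\<forall>k. cE (r k 0 0) = 0)"
proof -
  have "finite {(k, m, n). r k m n \<noteq> 0}" if "R_bounded N r" for N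
    by (rule finite_subset[of _ "{..<N} \<times> {..<N} \<times> {..<N}"]) (use that in \<open>auto simp: R_bounded_def\<close>)
  then show ?thesis
    using R_carrier_bounded by (auto simp: R_carrier_def)
qed

lemma R_carrier_obtain_bound:
  assumes "a \<in> R_carrier" and "b \<in> R_carrier" and "c \<in> R_carrier"
  obtains N where "R_bounded N a" and "R_bounded N b" and "R_bounded N c"
proof -
  obtain Na Nb Nc where "R_bounded Na a" "R_bounded Nb b" "R_bounded Nc c"
    using assms R_carrier_bounded by metis
  then have "R_bounded (max Na (max Nb Nc)) a" "R_bounded (max Na (max Nb Nc)) b" "R_bounded (max Na (max Nb Nc)) c"
    by (auto elim!: R_bounded_mono)
  then show ?thesis
    using that by blast
qed

lemma R_carrier_zero: "0 \<in> R_carrier"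
  unfolding R_carrier_iff R_bounded_def by simp

lemma R_carrier_add:
  fixes a b :: "'a::ab_group_add Relt"
  assumes "a \<in> R_carrier" and "b \<in> R_carrier"
  shows "a + b \<in> R_carrier"
proof -
  obtain N where "R_bounded N a" and "R_bounded N b"
    using R_carrier_obtain_bound[OF assms assms(1)] .
  with assms show ?thesis
    unfolding R_carrier_iff by (auto intro: R_bounded_add)
qed

lemma R_carrier_R_D:
  assumes "r \<in> R_carrier"
  shows "R_D r \<in> R_carrier"
proof -
  obtain N where "R_bounded N r"
    using assms R_carrier_bounded by blast
  then have "R_bounded (Suc N) (R_D r)"
    by (rule R_bounded_R_D)
  moreover have "cE (R_D r k 0 0) = 0" for k
    using assms by (cases k) (auto simp: R_carrier_iff R_D_def)
  ultimately show ?thesis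
    unfolding R_carrier_iff by blast
qed

lemma R_D_add: "R_D (a + b) = R_D a + R_D (b :: 'a::ab_group_add Relt)"
  by (simp add: R_D_def fun_eq_iff split: nat.split)

lemma lam_D_bounded_mono: "lam_D_bounded M P \<Longrightarrow> M \<le> M' \<Longrightarrow> lam_D_bounded M' P"
  by (fastforce simp: lam_D_bounded_def)

lemma lam_D_bounded_eq_0: "lam_D_bounded M P \<Longrightarrow> M \<le> j \<or> M \<le> k \<Longrightarrow> P j k = 0"
  unfolding lam_D_bounded_def by (meson not_le)

lemma lam_D_bounded_add:
  fixes P Q :: "nat \<Rightarrow> 'a::monoid_add Relt"
  shows "lam_D_bounded M P \<Longrightarrow> lam_D_bounded M Q \<Longrightarrow> lam_D_bounded M (\<lambda>j. P j + Q j)"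
  unfolding lam_D_bounded_def by (metis add.right_neutral add_0 plus_fun_apply)

lemma lam_D_bounded_uminus:
  fixes P :: "nat \<Rightarrow> 'a::group_add Relt"
  shows "lam_D_bounded M P \<Longrightarrow> lam_D_bounded M (\<lambda>j. - P j)"
  by (simp add: lam_D_bounded_def)

lemma lam_D_bounded_shift:
  assumes "lam_D_bounded M P"
  shows "lam_D_bounded (Suc M) (\<lambda>j. case j of 0 \<Rightarrow> 0 | Suc j \<Rightarrow> P j)"
  unfolding lam_D_bounded_def
proof (intro allI impI)
  fix j k
  assume "(case j of 0 \<Rightarrow> 0 | Suc j \<Rightarrow> P j) k \<noteq> 0"
  then obtain j' where "j = Suc j'" and "P j' k \<noteq> 0"
    by (cases j) auto
  moreover from this(2) have "j' < M \<and> k < M"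
    using assms unfolding lam_D_bounded_def by blast
  ultimately show "j < Suc M \<and> k < Suc M"
    by simp
qed

lemma lam_D_bounded_R_D:
  assumes "lam_D_bounded M P"
  shows "lam_D_bounded (Suc M) (\<lambda>j. R_D (P j))"
  unfolding lam_D_bounded_def
proof (intro allI impI)
  fix j k
  assume "R_D (P j) k \<noteq> 0"
  then obtain k' where "k = Suc k'" and "P j k' \<noteq> 0"
    by (cases k) (auto simp: R_D_def fun_eq_iff)
  moreover from this(2) have "j < M \<and> k' < M"
    using assms unfolding lam_D_bounded_def by blast
  ultimately show "j < Suc M \<and> k < Suc M"
    by simp
qed

section \<open>Brackets of generators at numerical values of lambda and d\<close>

locale R_JIEF =
  fixes sm :: "complex \<Rightarrow> 'a::ab_group_add \<Rightarrow> 'a" and br :: "'a \<Rightarrow> 'a \<Rightarrow> 'a" and \<beta> :: complex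
  assumes lie_algebra: "complex_lie_algebra sm br"
begin

sublocale V: vector_space sm
  using lie_algebra by (simp add: complex_lie_algebra_def)

lemma br_add_left: "br (x + y) z = br x z + br y z"
  and br_add_right: "br x (y + z) = br x y + br x z"
  and br_scale_left: "br (sm c x) y = sm c (br x y)"
  and br_scale_right: "br x (sm c y) = sm c (br x y)"
  and br_self: "br x x = 0"
  and br_jacobi: "br x (br y z) + br y (br z x) + br z (br x y) = 0"
  using lie_algebra by (simp_all add: complex_lie_algebra_def)

lemma br_zero_left [simp]: "br 0 y = 0"
  using br_add_left[of 0 0 y] by simp

lemma br_zero_right [simp]: "br y 0 = 0"
  using br_add_right[of y 0 0] by simp

lemma br_minus_left: "br (- x) y = - br x y"
  using minus_unique[of "br x y" "br (- x) y"] br_add_left[of x "- x" y] by simp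

lemma br_minus_right: "br y (- x) = - br y x"
  using minus_unique[of "br y x" "br y (- x)"] br_add_right[of y x "- x"] by simp

lemma br_diff_left: "br (x - y) z = br x z - br y z"
  using br_add_left[of x "- y" z] by (simp add: br_minus_left)

lemma br_diff_right: "br z (x - y) = br z x - br z y"
  using br_add_right[of z x "- y"] by (simp add: br_minus_right)

lemmas br_linear = br_add_left br_add_right br_scale_left br_scale_right
  br_minus_left br_minus_right br_diff_left br_diff_right

lemma br_anticomm: "br y x = - br x y"
proof -
  have "br (x + y) (x + y) = br x x + br x y + (br y x + br y y)"
    by (simp add: br_add_left br_add_right add.assoc)
  then have "br x y + br y x = 0"
    by (simp add: br_self)
  then show ?thesis
    by (metis minus_unique)
qed

lemma br_leibniz: "br a (br b c) = br b (br a c) + br (br a b) c"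
  using br_jacobi[of a b c]
  by (simp add: br_anticomm[of c "br a b"] br_anticomm[of a c] br_minus_right algebra_simps eq_neg_iff_add_eq_0)

sublocale G: vector_space "csc sm"
  by unfold_locales (rule gcomp_eqI; simp add: csc_def algebra_simps)+

definition uv_scale :: "complex \<Rightarrow> 'a uv \<Rightarrow> 'a uv" where
  "uv_scale z u = (\<lambda>m n. csc sm z (u m n))"

sublocale W: vector_space uv_scale
  by unfold_locales
    (simp_all add: uv_scale_def fun_eq_iff G.scale_right_distrib G.scale_left_distrib)

lemma R_sc_apply: "R_sc sm z r k = uv_scale z (r k)"
  by (simp add: R_sc_def uv_scale_def)

sublocale R: vector_space "R_sc sm"
  by unfold_locales
    (simp_all add: R_sc_apply fun_eq_iff W.scale_right_distrib W.scale_left_distrib)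

text \<open>\<open>F_coeff f m n t s l d\<close> is the coefficient of \<open>I_a[m + t, n + s]\<close> in \<open>[J_a[m, n]\<^sub>\<lambda> f F[t, s]]\<close> at
  \<open>\<lambda> = l\<close>, \<open>\<partial> = d\<close>; \<open>E_coeff e m n t s\<close> is that of \<open>I_a[m + t - 1, n + s - 1]\<close> in \<open>[J_a[m, n]\<^sub>\<lambda> e E[t, s]]\<close>.\<close>

definition F_coeff :: "complex \<Rightarrow> nat \<Rightarrow> nat \<Rightarrow> nat \<Rightarrow> nat \<Rightarrow> complex \<Rightarrow> complex \<Rightarrow> complex" where
  "F_coeff f m n t s l d = f * (- \<beta> * (l + of_nat (m + n) / of_nat (t + s + 2) * (l + d)))"

definition E_coeff :: "complex \<Rightarrow> nat \<Rightarrow> nat \<Rightarrow> nat \<Rightarrow> nat \<Rightarrow> complex" where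
  "E_coeff e m n t s = e * (\<beta> * (of_nat (s * m) - of_nat (t * n)) / of_nat (t + s))"

lemma F_coeff_add:
  assumes "l = l1 + l2" and "d1 = l2 + d" and "d2 = l1 + d"
  shows "F_coeff f (m1 + m2) (n1 + n2) t s l d = F_coeff f m1 n1 t s l1 d1 + F_coeff f m2 n2 t s l2 d2"
  using assms by (simp add: F_coeff_def add_divide_distrib algebra_simps)

lemma F_coeff_zero [simp]: "F_coeff 0 m n t s l d = 0"
  and F_coeff_plus: "F_coeff (f + f') m n t s l d = F_coeff f m n t s l d + F_coeff f' m n t s l d"
  and F_coeff_times: "F_coeff (c * f) m n t s l d = c * F_coeff f m n t s l d"
  by (simp_all only: F_coeff_def distrib_right mult.assoc mult_zero_left)

lemma E_coeff_zero [simp]: "E_coeff 0 m n t s = 0"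
  and E_coeff_plus: "E_coeff (e + e') m n t s = E_coeff e m n t s + E_coeff e' m n t s"
  and E_coeff_times: "E_coeff (c * e) m n t s = c * E_coeff e m n t s"
  by (simp_all only: E_coeff_def distrib_right mult.assoc mult_zero_left)

lemma E_coeff_add: "E_coeff e (m + m') (n + n') t s = E_coeff e m n t s + E_coeff e m' n' t s"
  by (simp add: E_coeff_def add_divide_distrib diff_divide_distrib algebra_simps)

text \<open>The bracket of the generators \<open>x\<close> at \<open>[m, n]\<close> and \<open>y\<close> at \<open>[t, s]\<close> at \<open>\<lambda> = l\<close>, \<open>\<partial> = d\<close> has a component
  in degree \<open>[m + t, n + s]\<close> and one in degree \<open>[m + t - 1, n + s - 1]\<close>; the terms with \<open>J\<close> on the right
  come from skew-symmetry, hence the argument \<open>- l - d\<close>.\<close>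

definition gen_lbr_top :: "'a gcomp \<Rightarrow> nat \<Rightarrow> nat \<Rightarrow> 'a gcomp \<Rightarrow> nat \<Rightarrow> nat \<Rightarrow> complex \<Rightarrow> complex \<Rightarrow> 'a gcomp" where
  "gen_lbr_top x m n y t s l d =
     (br (cJ x) (cJ y),
      br (cJ x) (cI y) - br (cJ y) (cI x)
        + sm (F_coeff (cF y) m n t s l d) (cJ x) - sm (F_coeff (cF x) t s m n (- l - d) d) (cJ y),
      0, 0)"

definition gen_lbr_low :: "'a gcomp \<Rightarrow> nat \<Rightarrow> nat \<Rightarrow> 'a gcomp \<Rightarrow> nat \<Rightarrow> nat \<Rightarrow> 'a gcomp" where
  "gen_lbr_low x m n y t s = (0, sm (E_coeff (cE y) m n t s) (cJ x) - sm (E_coeff (cE x) t s m n) (cJ y), 0, 0)"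

lemma gen_lbr_top_zero_left [simp]: "gen_lbr_top 0 m n y t s l d = 0"
  and gen_lbr_top_zero_right [simp]: "gen_lbr_top x m n 0 t s l d = 0"
  and gen_lbr_low_zero_left [simp]: "gen_lbr_low 0 m n y t s = 0"
  and gen_lbr_low_zero_right [simp]: "gen_lbr_low x m n 0 t s = 0"
  by (simp_all add: gen_lbr_top_def gen_lbr_low_def gcomp_zero)

lemma gen_lbr_low_nested_left: "gen_lbr_low (gen_lbr_low x m n y t s) i j z k r = 0"
  and gen_lbr_low_nested_right: "gen_lbr_low x i j (gen_lbr_low y m n z t s) k r = 0"
  by (simp_all add: gen_lbr_low_def gcomp_zero)

lemma gen_lbr_top_jacobi:
  "gen_lbr_top x m1 n1 (gen_lbr_top y m2 n2 z m3 n3 \<mu> (l + d)) (m2 + m3) (n2 + n3) l d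
   = gen_lbr_top y m2 n2 (gen_lbr_top x m1 n1 z m3 n3 l (\<mu> + d)) (m1 + m3) (n1 + n3) \<mu> d
     + gen_lbr_top (gen_lbr_top x m1 n1 y m2 n2 l (- l - \<mu>)) (m1 + m2) (n1 + n2) z m3 n3 (l + \<mu>) d"
  (is "?lhs = ?rhs")
proof (rule gcomp_eqI)
  let ?x = "cJ x" and ?y = "cJ y" and ?z = "cJ z"
  have Fx: "F_coeff (cF x) (m2 + m3) (n2 + n3) m1 n1 (- l - d) d
      = F_coeff (cF x) m2 n2 m1 n1 \<mu> (- l - \<mu>) + F_coeff (cF x) m3 n3 m1 n1 (- l - (\<mu> + d)) (\<mu> + d)"
    by (rule F_coeff_add) simp_all
  have Fy: "F_coeff (cF y) (m1 + m3) (n1 + n3) m2 n2 (- \<mu> - d) d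
      = F_coeff (cF y) m1 n1 m2 n2 l (- l - \<mu>) + F_coeff (cF y) m3 n3 m2 n2 (- \<mu> - (l + d)) (l + d)"
    by (rule F_coeff_add) simp_all
  have Fz: "F_coeff (cF z) (m1 + m2) (n1 + n2) m3 n3 (l + \<mu>) d
      = F_coeff (cF z) m1 n1 m3 n3 l (\<mu> + d) + F_coeff (cF z) m2 n2 m3 n3 \<mu> (l + d)"
    by (rule F_coeff_add) simp_all
  have leibniz: "br ?x (br ?y (cI z)) = br ?y (br ?x (cI z)) + br (br ?x ?y) (cI z)"
    "br ?x (br ?z (cI y)) = br ?z (br ?x (cI y)) + br (br ?x ?z) (cI y)"
    "br (br ?y ?z) (cI x) = br ?y (br ?z (cI x)) - br ?z (br ?y (cI x))"
    by (rule br_leibniz)+ (simp add: br_leibniz[of ?y ?z "cI x"])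
  have anticomm: "br ?y ?x = - br ?x ?y" "br ?z ?x = - br ?x ?z" "br ?z ?y = - br ?y ?z"
    by (simp_all add: br_anticomm[symmetric])
  show "cI ?lhs = cI ?rhs"
    by (simp add: gen_lbr_top_def Fx Fy Fz)
      (simp add: leibniz anticomm br_linear V.scale_left_distrib V.scale_right_distrib algebra_simps)
qed (simp_all add: gen_lbr_top_def br_leibniz[of "cJ x" "cJ y" "cJ z"])

lemma gen_lbr_low_jacobi:
  "gen_lbr_low x m1 n1 (gen_lbr_top y m2 n2 z m3 n3 \<mu> (l + d)) (m2 + m3) (n2 + n3)
     + gen_lbr_top x m1 n1 (gen_lbr_low y m2 n2 z m3 n3) (m2 + m3 - 1) (n2 + n3 - 1) l d
   = gen_lbr_low y m2 n2 (gen_lbr_top x m1 n1 z m3 n3 l (\<mu> + d)) (m1 + m3) (n1 + n3)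
     + gen_lbr_top y m2 n2 (gen_lbr_low x m1 n1 z m3 n3) (m1 + m3 - 1) (n1 + n3 - 1) \<mu> d
     + (gen_lbr_low (gen_lbr_top x m1 n1 y m2 n2 l (- l - \<mu>)) (m1 + m2) (n1 + n2) z m3 n3
     + gen_lbr_top (gen_lbr_low x m1 n1 y m2 n2) (m1 + m2 - 1) (n1 + n2 - 1) z m3 n3 (l + \<mu>) d)"
  (is "?lhs = ?rhs")
proof (rule gcomp_eqI)
  have anticomm: "br (cJ y) (cJ x) = - br (cJ x) (cJ y)" "br (cJ z) (cJ x) = - br (cJ x) (cJ z)"
    "br (cJ z) (cJ y) = - br (cJ y) (cJ z)"
    by (simp_all add: br_anticomm[symmetric])
  show "cI ?lhs = cI ?rhs"
    by (simp add: gen_lbr_top_def gen_lbr_low_def E_coeff_add)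
      (simp add: anticomm br_linear V.scale_left_distrib V.scale_right_distrib algebra_simps)
qed (simp_all add: gen_lbr_top_def gen_lbr_low_def)

lemma gen_lbr_top_skew: "gen_lbr_top x m n y t s l d = - gen_lbr_top y t s x m n (- l - d) d"
  by (rule gcomp_eqI) (simp_all add: gen_lbr_top_def br_anticomm[of "cJ x"])

lemma gen_lbr_low_skew: "gen_lbr_low x m n y t s = - gen_lbr_low y t s x m n"
  by (rule gcomp_eqI) (simp_all add: gen_lbr_low_def)

lemma gen_lbr_low_eq_0: "m + t = 0 \<or> n + s = 0 \<Longrightarrow> gen_lbr_low x m n y t s = 0"
  by (auto simp: gen_lbr_low_def E_coeff_def gcomp_zero)

lemma gen_lbr_top_add_left: "gen_lbr_top (x + x') m n y t s l d = gen_lbr_top x m n y t s l d + gen_lbr_top x' m n y t s l d"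
  and gen_lbr_top_add_right: "gen_lbr_top x m n (y + y') t s l d = gen_lbr_top x m n y t s l d + gen_lbr_top x m n y' t s l d"
  and gen_lbr_top_scale_left: "gen_lbr_top (csc sm c x) m n y t s l d = csc sm c (gen_lbr_top x m n y t s l d)"
  and gen_lbr_top_scale_right: "gen_lbr_top x m n (csc sm c y) t s l d = csc sm c (gen_lbr_top x m n y t s l d)"
  by (rule gcomp_eqI;
      simp add: gen_lbr_top_def F_coeff_plus F_coeff_times csc_def br_linear V.scale_left_distrib V.scale_right_distrib algebra_simps)+

lemma gen_lbr_low_add_left: "gen_lbr_low (x + x') m n y t s = gen_lbr_low x m n y t s + gen_lbr_low x' m n y t s"
  and gen_lbr_low_add_right: "gen_lbr_low x m n (y + y') t s = gen_lbr_low x m n y t s + gen_lbr_low x m n y' t s"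
  and gen_lbr_low_scale_left: "gen_lbr_low (csc sm c x) m n y t s = csc sm c (gen_lbr_low x m n y t s)"
  and gen_lbr_low_scale_right: "gen_lbr_low x m n (csc sm c y) t s = csc sm c (gen_lbr_low x m n y t s)"
  by (rule gcomp_eqI;
      simp add: gen_lbr_low_def E_coeff_plus E_coeff_times csc_def V.scale_left_distrib V.scale_right_distrib algebra_simps)+

definition gen_lbr :: "'a gcomp \<Rightarrow> nat \<Rightarrow> nat \<Rightarrow> 'a gcomp \<Rightarrow> nat \<Rightarrow> nat \<Rightarrow> complex \<Rightarrow> complex \<Rightarrow> 'a uv" where
  "gen_lbr x m n y t s l d =
     uv_mono (m + t) (n + s) (gen_lbr_top x m n y t s l d) + uv_mono (m + t - 1) (n + s - 1) (gen_lbr_low x m n y t s)"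

lemma uv_scale_uv_mono: "uv_scale c (uv_mono i j v) = uv_mono i j (csc sm c v)"
  by (simp add: uv_mono_def uv_scale_def fun_eq_iff)

lemma gen_lbr_add_left: "gen_lbr (x + x') m n y t s l d = gen_lbr x m n y t s l d + gen_lbr x' m n y t s l d"
  and gen_lbr_add_right: "gen_lbr x m n (y + y') t s l d = gen_lbr x m n y t s l d + gen_lbr x m n y' t s l d"
  and gen_lbr_scale_left: "gen_lbr (csc sm c x) m n y t s l d = uv_scale c (gen_lbr x m n y t s l d)"
  and gen_lbr_scale_right: "gen_lbr x m n (csc sm c y) t s l d = uv_scale c (gen_lbr x m n y t s l d)"
  by (simp_all add: gen_lbr_def gen_lbr_top_add_left gen_lbr_top_add_right gen_lbr_top_scale_left gen_lbr_top_scale_right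
      gen_lbr_low_add_left gen_lbr_low_add_right gen_lbr_low_scale_left gen_lbr_low_scale_right
      uv_mono_add[symmetric] uv_scale_uv_mono W.scale_right_distrib add_ac)

lemma gen_lbr_zero_left [simp]: "gen_lbr 0 m n y t s l d = 0"
  and gen_lbr_zero_right [simp]: "gen_lbr x m n 0 t s l d = 0"
  using gen_lbr_scale_left[of 0 0] gen_lbr_scale_right[of _ _ _ 0 0] by simp_all

lemma gen_lbr_skew: "gen_lbr x m n y t s l d = - gen_lbr y t s x m n (- l - d) d"
  unfolding gen_lbr_def gen_lbr_top_skew[of x m n y t s l d] gen_lbr_low_skew[of x m n y t s]
  by (simp add: uv_mono_uminus ac_simps)

lemma gen_lbr_nonzero: "gen_lbr x m n y t s l d p q \<noteq> 0 \<Longrightarrow> m + t \<le> p + 1 \<and> n + s \<le> q + 1"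
  by (auto simp: gen_lbr_def uv_mono_def split: if_splits)

section \<open>Bilinear extension to (g x g x h)[u, v]\<close>

text \<open>Only pairs of generators with \<open>m + t \<le> p + 1\<close> and \<open>n + s \<le> q + 1\<close> contribute in degree \<open>(p, q)\<close>,
  so these finite sums define the bilinear extension to arbitrary \<open>u\<close> and \<open>v\<close>.\<close>

definition uv_lbr :: "'a uv \<Rightarrow> 'a uv \<Rightarrow> complex \<Rightarrow> complex \<Rightarrow> 'a uv" where
  "uv_lbr u v l d = (\<lambda>p q. \<Sum>m<p+2. \<Sum>n<q+2. \<Sum>t<p+2. \<Sum>s<q+2. gen_lbr (u m n) m n (v t s) t s l d p q)"

lemma uv_lbr_add_left: "uv_lbr (u + u') v l d = uv_lbr u v l d + uv_lbr u' v l d"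
  and uv_lbr_add_right: "uv_lbr u (v + v') l d = uv_lbr u v l d + uv_lbr u v' l d"
  by (simp_all add: uv_lbr_def fun_eq_iff gen_lbr_add_left gen_lbr_add_right sum.distrib)

lemma uv_lbr_scale_left: "uv_lbr (uv_scale c u) v l d = uv_scale c (uv_lbr u v l d)"
  and uv_lbr_scale_right: "uv_lbr u (uv_scale c v) l d = uv_scale c (uv_lbr u v l d)"
  by (simp_all only: uv_lbr_def uv_scale_def gen_lbr_scale_left gen_lbr_scale_right G.scale_sum_right)

lemma uv_lbr_zero_left [simp]: "uv_lbr 0 v l d = 0"
  and uv_lbr_zero_right [simp]: "uv_lbr u 0 l d = 0"
  by (simp_all add: uv_lbr_def fun_eq_iff)

lemma uv_lbr_sum_left: "uv_lbr (\<Sum>i\<in>A. f i) v l d = (\<Sum>i\<in>A. uv_lbr (f i) v l d)"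
  using sum_comp_morphism[of "\<lambda>u. uv_lbr u v l d" f A] by (simp only: uv_lbr_zero_left uv_lbr_add_left o_def)

lemma uv_lbr_sum_right: "uv_lbr u (\<Sum>i\<in>A. f i) l d = (\<Sum>i\<in>A. uv_lbr u (f i) l d)"
  using sum_comp_morphism[of "\<lambda>v. uv_lbr u v l d" f A] by (simp only: uv_lbr_zero_right uv_lbr_add_right o_def)

lemma uv_lbr_uv_mono: "uv_lbr (uv_mono i j x) (uv_mono k r y) l d = gen_lbr x i j y k r l d"
proof (intro ext)
  fix p q
  have delta: "gen_lbr (uv_mono i j x m n) m n (uv_mono k r y t s) t s l d p q
     = (if m = i \<and> n = j \<and> t = k \<and> s = r then gen_lbr x i j y k r l d p q else 0)" for m n t s
    by (simp add: uv_mono_def)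
  have "gen_lbr x i j y k r l d p q = 0" if "\<not> (i < p+2 \<and> j < q+2 \<and> k < p+2 \<and> r < q+2)"
    using gen_lbr_nonzero[of x i j y k r l d p q] that by fastforce
  then show "uv_lbr (uv_mono i j x) (uv_mono k r y) l d p q = gen_lbr x i j y k r l d p q"
    unfolding uv_lbr_def delta sum_delta4[OF finite_lessThan finite_lessThan finite_lessThan finite_lessThan]
    by auto
qed

lemma uv_lbr_uv_mono_gen_lbr:
  "uv_lbr (uv_mono i j x) (gen_lbr y m n z t s \<mu> e) l d
   = uv_mono (i + m + t) (j + n + s) (gen_lbr_top x i j (gen_lbr_top y m n z t s \<mu> e) (m + t) (n + s) l d)
     + uv_mono (i + m + t - 1) (j + n + s - 1)
         (gen_lbr_low x i j (gen_lbr_top y m n z t s \<mu> e) (m + t) (n + s)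
          + gen_lbr_top x i j (gen_lbr_low y m n z t s) (m + t - 1) (n + s - 1) l d)"
proof -
  have "uv_mono (i + (m + t - 1)) (j + (n + s - 1)) (gen_lbr_top x i j (gen_lbr_low y m n z t s) (m + t - 1) (n + s - 1) l d)
      = uv_mono (i + m + t - 1) (j + n + s - 1) (gen_lbr_top x i j (gen_lbr_low y m n z t s) (m + t - 1) (n + s - 1) l d)"
  \<comment> \<open>The subtraction of 1 is truncated only when the low component vanishes anyway.\<close>
  proof (cases "m + t = 0 \<or> n + s = 0")
    case False
    then have "i + (m + t - 1) = i + m + t - 1" "j + (n + s - 1) = j + n + s - 1"
      by auto
    then show ?thesis by simp
  qed (simp add: gen_lbr_low_eq_0)
  then show ?thesis
    by (simp add: gen_lbr_def uv_lbr_add_right uv_lbr_uv_mono gen_lbr_low_nested_right uv_mono_add[symmetric]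
        add.assoc)
qed

lemma uv_lbr_gen_lbr_uv_mono:
  "uv_lbr (gen_lbr x i j y m n l e) (uv_mono t s z) \<mu> d
   = uv_mono (i + m + t) (j + n + s) (gen_lbr_top (gen_lbr_top x i j y m n l e) (i + m) (j + n) z t s \<mu> d)
     + uv_mono (i + m + t - 1) (j + n + s - 1)
         (gen_lbr_low (gen_lbr_top x i j y m n l e) (i + m) (j + n) z t s
          + gen_lbr_top (gen_lbr_low x i j y m n) (i + m - 1) (j + n - 1) z t s \<mu> d)"
proof -
  have "uv_mono (i + m - 1 + t) (j + n - 1 + s) (gen_lbr_top (gen_lbr_low x i j y m n) (i + m - 1) (j + n - 1) z t s \<mu> d)
      = uv_mono (i + m + t - 1) (j + n + s - 1) (gen_lbr_top (gen_lbr_low x i j y m n) (i + m - 1) (j + n - 1) z t s \<mu> d)"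
  proof (cases "i + m = 0 \<or> j + n = 0")
    case False
    then have "i + m - 1 + t = i + m + t - 1" "j + n - 1 + s = j + n + s - 1"
      by auto
    then show ?thesis by simp
  qed (simp add: gen_lbr_low_eq_0)
  then show ?thesis
    by (simp add: gen_lbr_def uv_lbr_add_left uv_lbr_uv_mono gen_lbr_low_nested_left uv_mono_add[symmetric]
        add.assoc)
qed

lemma uv_lbr_jacobi_uv_mono:
  "uv_lbr (uv_mono m1 n1 x) (uv_lbr (uv_mono m2 n2 y) (uv_mono m3 n3 z) \<mu> (l + d)) l d
   = uv_lbr (uv_mono m2 n2 y) (uv_lbr (uv_mono m1 n1 x) (uv_mono m3 n3 z) l (\<mu> + d)) \<mu> d
     + uv_lbr (uv_lbr (uv_mono m1 n1 x) (uv_mono m2 n2 y) l (- l - \<mu>)) (uv_mono m3 n3 z) (l + \<mu>) d"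
proof -
  have "m2 + m1 + m3 = m1 + m2 + m3" "n2 + n1 + n3 = n1 + n2 + n3"
    by simp_all
  then show ?thesis
    unfolding uv_lbr_uv_mono uv_lbr_uv_mono_gen_lbr uv_lbr_gen_lbr_uv_mono
      gen_lbr_top_jacobi[of x m1 n1 y m2 n2 z m3 n3 \<mu> l d] gen_lbr_low_jacobi[of x m1 n1 y m2 n2 z m3 n3 \<mu> l d]
    by (simp add: uv_mono_add[symmetric] add_ac)
qed

definition uv_part :: "'a uv \<Rightarrow> nat \<times> nat \<Rightarrow> 'a uv" where
  "uv_part u p = uv_mono (fst p) (snd p) (u (fst p) (snd p))"

lemma uv_decomp:
  assumes "uv_bounded N u"
  shows "u = (\<Sum>p\<in>{..<N} \<times> {..<N}. uv_part u p)"
proof (intro ext)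
  fix m n
  have "(\<Sum>p\<in>{..<N} \<times> {..<N}. uv_part u p) m n = (\<Sum>p\<in>{..<N} \<times> {..<N}. if p = (m, n) then u m n else 0)"
    unfolding sum_apply by (intro sum.cong) (auto simp: uv_part_def uv_mono_def)
  also have "\<dots> = u m n"
    using assms by (auto simp: uv_bounded_def)
  finally show "u m n = (\<Sum>p\<in>{..<N} \<times> {..<N}. uv_part u p) m n" ..
qed

lemma uv_lbr_uv_part: "uv_lbr (uv_part u p) (uv_part v q) l d
    = gen_lbr (u (fst p) (snd p)) (fst p) (snd p) (v (fst q) (snd q)) (fst q) (snd q) l d"
  by (simp add: uv_part_def uv_lbr_uv_mono)

lemma uv_lbr_expand:
  assumes "uv_bounded N u" and "uv_bounded N v"
  shows "uv_lbr u v l d = (\<Sum>p\<in>{..<N} \<times> {..<N}. \<Sum>q\<in>{..<N} \<times> {..<N}. uv_lbr (uv_part u p) (uv_part v q) l d)"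
proof -
  have "uv_lbr u v l d = uv_lbr (\<Sum>p\<in>{..<N} \<times> {..<N}. uv_part u p) (\<Sum>q\<in>{..<N} \<times> {..<N}. uv_part v q) l d"
    using uv_decomp[OF assms(1), symmetric] uv_decomp[OF assms(2), symmetric] by (simp only:)
  also have "\<dots> = (\<Sum>q\<in>{..<N} \<times> {..<N}. \<Sum>p\<in>{..<N} \<times> {..<N}. uv_lbr (uv_part u p) (uv_part v q) l d)"
    by (simp only: uv_lbr_sum_left uv_lbr_sum_right)
  also have "\<dots> = (\<Sum>p\<in>{..<N} \<times> {..<N}. \<Sum>q\<in>{..<N} \<times> {..<N}. uv_lbr (uv_part u p) (uv_part v q) l d)"
    by (rule sum.swap)
  finally show ?thesis .
qed

lemma uv_lbr_skew:
  assumes "uv_bounded N u" and "uv_bounded N v"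
  shows "uv_lbr u v l d = - uv_lbr v u (- l - d) d"
proof -
  have "uv_lbr (uv_part v q) (uv_part u p) (- l - d) d = - uv_lbr (uv_part u p) (uv_part v q) l d" for p q
    unfolding uv_lbr_uv_part by (subst gen_lbr_skew) simp
  then show ?thesis
    unfolding uv_lbr_expand[OF assms] uv_lbr_expand[OF assms(2,1)] sum_negf
    by (subst sum.swap) (simp add: sum_negf)
qed

lemma uv_lbr_jacobi:
  assumes "uv_bounded N u" and "uv_bounded N v" and "uv_bounded N w"
  shows "uv_lbr u (uv_lbr v w \<mu> (l + d)) l d
    = uv_lbr v (uv_lbr u w l (\<mu> + d)) \<mu> d + uv_lbr (uv_lbr u v l (- l - \<mu>)) w (l + \<mu>) d"
proof -
  define J where "J u v w = uv_lbr u (uv_lbr v w \<mu> (l + d)) l d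
    - uv_lbr v (uv_lbr u w l (\<mu> + d)) \<mu> d - uv_lbr (uv_lbr u v l (- l - \<mu>)) w (l + \<mu>) d" for u v w
  have J_sum: "J (\<Sum>i\<in>A. f i) v w = (\<Sum>i\<in>A. J (f i) v w)"
    "J u (\<Sum>i\<in>A. f i) w = (\<Sum>i\<in>A. J u (f i) w)"
    "J u v (\<Sum>i\<in>A. f i) = (\<Sum>i\<in>A. J u v (f i))" for A f u v w
    unfolding J_def by (simp_all only: uv_lbr_sum_left uv_lbr_sum_right sum_subtractf)
  have J_mono: "J (uv_mono m1 n1 x) (uv_mono m2 n2 y) (uv_mono m3 n3 z) = 0" for m1 n1 x m2 n2 y m3 n3 z
    unfolding J_def by (subst uv_lbr_jacobi_uv_mono) simp
  let ?B = "{..<N} \<times> {..<N}"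
  have "J u v w = J (\<Sum>a\<in>?B. uv_part u a) (\<Sum>b\<in>?B. uv_part v b) (\<Sum>c\<in>?B. uv_part w c)"
    using uv_decomp[OF assms(1), symmetric] uv_decomp[OF assms(2), symmetric] uv_decomp[OF assms(3), symmetric]
    by (simp only:)
  also have "\<dots> = 0"
    unfolding J_sum uv_part_def J_mono by simp
  finally have "J u v w = 0" .
  then show ?thesis
    unfolding J_def by (simp only: diff_diff_eq right_minus_eq)
qed

section \<open>Evaluating the lambda-bracket of R\<close>

abbreviation D_eval :: "nat \<Rightarrow> 'a Relt \<Rightarrow> complex \<Rightarrow> 'a uv" where
  "D_eval M r z \<equiv> vec_poly uv_scale M r z"

abbreviation lam_D_eval :: "nat \<Rightarrow> (nat \<Rightarrow> 'a Relt) \<Rightarrow> complex \<Rightarrow> complex \<Rightarrow> 'a uv" where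
  "lam_D_eval M P l d \<equiv> vec_poly uv_scale M (\<lambda>j. D_eval M (P j) d) l"

lemma lmono_apply: "lmono j0 k0 p q v j k = (if j = j0 \<and> k = k0 then uv_mono p q v else 0)"
  by (auto simp: lmono_def uv_mono_def fun_eq_iff)

lemma lam_D_eval_gen_br: "lam_D_eval 2 (gen_br sm br \<beta> x m n y t s) l d = gen_lbr x m n y t s l d"
proof -
  define M where "M = (of_nat (m + n) :: complex)"
  define T where "T = (of_nat (t + s) :: complex)"
  define q where "q = M / (T + 2)"
  define p where "p = T / (M + 2)"
  have "of_nat (m + n) / of_nat (t + s + 2) = q" "of_nat (t + s) / of_nat (m + n + 2) = p"
    by (simp_all add: q_def p_def M_def T_def)
  then have Fy: "F_coeff (cF y) m n t s l d = l * (- \<beta> * cF y * (1 + q)) + d * (- \<beta> * cF y * q)"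
    and Fx: "F_coeff (cF x) t s m n (- l - d) d = - (l * (\<beta> * cF x * (- 1 - p)) + d * (- \<beta> * cF x))"
    unfolding F_coeff_def by (simp_all add: algebra_simps)
  have top: "(br (cJ x) (cJ y), br (cJ x) (cI y) - br (cJ y) (cI x), 0, 0)
      + csc sm l (0, sm (- \<beta> * cF y * (1 + q)) (cJ x) + sm (\<beta> * cF x * (- 1 - p)) (cJ y), 0, 0)
      + csc sm d (0, sm (- \<beta> * cF y * q) (cJ x) + sm (- \<beta> * cF x) (cJ y), 0, 0)
    = gen_lbr_top x m n y t s l d"
    by (rule gcomp_eqI)
      (simp_all add: gen_lbr_top_def csc_def Fx Fy V.scale_right_distrib V.scale_left_distrib algebra_simps)
  have low: "(0, sm (\<beta> * cE y * ((of_nat (s * m) - of_nat (t * n)) / T)) (cJ x)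
      - sm (\<beta> * cE x * ((of_nat (n * t) - of_nat (m * s)) / M)) (cJ y), 0, 0) = gen_lbr_low x m n y t s"
    by (simp add: gen_lbr_low_def E_coeff_def M_def T_def mult_ac)
  show ?thesis
    unfolding gen_br_def Let_def gen_lbr_def M_def[symmetric] T_def[symmetric] q_def[symmetric] p_def[symmetric]
      top[symmetric] low[symmetric]
    by (simp add: vec_poly_def numeral_2_eq_2 lmono_apply uv_scale_uv_mono uv_mono_add add_ac)
qed

lemma R_bounded_R_sc:
  assumes "R_bounded N r"
  shows "R_bounded N (R_sc sm z r)"
  unfolding R_bounded_def
proof (intro allI impI)
  fix k m n
  assume "R_sc sm z r k m n \<noteq> 0"
  then have "r k m n \<noteq> 0"
    unfolding R_sc_def by (metis G.scale_zero_right)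
  then show "k < N \<and> m < N \<and> n < N"
    using assms unfolding R_bounded_def by blast
qed

lemma D_eval_R_sc: "D_eval M (R_sc sm z r) x = uv_scale z (D_eval M r x)"
proof -
  have "R_sc sm z r = (\<lambda>k. uv_scale z (r k))"
    by (rule ext) (rule R_sc_apply)
  then show ?thesis
    by (simp add: W.vec_poly_scale)
qed

lemma D_eval_R_D: "D_eval (Suc M) (R_D r) x = uv_scale x (D_eval M r x)"
proof -
  have "R_D r = (\<lambda>k. case k of 0 \<Rightarrow> 0 | Suc k \<Rightarrow> r k)"
    by (simp add: R_D_def fun_eq_iff split: nat.split)
  then show ?thesis
    by (simp add: W.vec_poly_mult_var)
qed

lemma D_eval_extend: "R_bounded N r \<Longrightarrow> N \<le> M \<Longrightarrow> D_eval M r x = D_eval N r x"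
  by (rule W.vec_poly_extend) (auto intro: R_bounded_eq_0)

lemma uv_bounded_D_eval:
  assumes "R_bounded N r"
  shows "uv_bounded N (D_eval M r x)"
  unfolding uv_bounded_def
proof (intro allI impI)
  fix m n
  assume "D_eval M r x m n \<noteq> 0"
  then obtain k where "csc sm (x ^ k) (r k m n) \<noteq> 0"
    unfolding vec_poly_def sum_apply uv_scale_def by (meson sum.not_neutral_contains_not_neutral)
  then have "r k m n \<noteq> 0"
    by (metis G.scale_zero_right)
  then show "m < N \<and> n < N"
    using assms unfolding R_bounded_def by blast
qed

lemma lam_D_eval_sum: "lam_D_eval M (\<Sum>i\<in>A. P i) l d = (\<Sum>i\<in>A. lam_D_eval M (P i) l d)"
  by (simp add: sum_apply W.vec_poly_sum W.vec_poly_sum_fun)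

lemma lshift_apply:
  "lshift sm c j0 k0 G j = (\<lambda>k. if j0 \<le> j \<and> k0 \<le> k then uv_scale c (G (j - j0) (k - k0)) else 0)"
  by (auto simp: lshift_def uv_scale_def fun_eq_iff)

lemma gen_br_nonzero:
  assumes "gen_br sm br \<beta> x m n y t s j k p q \<noteq> 0"
  shows "j < 2 \<and> k < 2 \<and> p \<le> m + t \<and> q \<le> n + s"
proof (rule ccontr)
  assume "\<not> ?thesis"
  then have "lmono j' k' p' q' c j k p q = 0" if "j' < 2" "k' < 2" "p' \<le> m + t" "q' \<le> n + s" for j' k' p' q' and c :: "'a gcomp"
    using that by (auto simp: lmono_def)
  then have "gen_br sm br \<beta> x m n y t s j k p q = 0"
    unfolding gen_br_def Let_def plus_fun_apply by simp
  with assms show False ..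
qed

lemma gen_br_eq_0: "2 \<le> j \<or> 2 \<le> k \<Longrightarrow> gen_br sm br \<beta> x m n y t s j k = 0"
  using gen_br_nonzero[of x m n y t s j k] by (fastforce simp: fun_eq_iff)

lemma lam_D_eval_lshift:
  assumes "j0 + 2 \<le> M" and "k0 + 2 \<le> M" and "\<And>j k. 2 \<le> j \<or> 2 \<le> k \<Longrightarrow> G j k = 0"
  shows "lam_D_eval M (lshift sm c j0 k0 G) l d = uv_scale (c * l ^ j0 * d ^ k0) (lam_D_eval 2 G l d)"
proof -
  have "D_eval M (lshift sm c j0 k0 G j) d
      = (if j0 \<le> j then uv_scale (c * d ^ k0) (D_eval 2 (G (j - j0)) d) else 0)" for j
  proof (cases "j0 \<le> j")
    case True
    then have "D_eval M (lshift sm c j0 k0 G j) d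
        = D_eval M (\<lambda>k. if k0 \<le> k then uv_scale c (G (j - j0) (k - k0)) else 0) d"
      by (simp add: lshift_apply)
    also have "\<dots> = uv_scale (d ^ k0) (D_eval 2 (\<lambda>k. uv_scale c (G (j - j0) k)) d)"
    proof (rule W.vec_poly_shift)
      show "uv_scale c (G (j - j0) k) = 0" if "2 \<le> k" for k
        using assms(3)[of "j - j0" k] that by simp
    qed (use assms in simp)
    finally show ?thesis
      using True by (simp add: W.vec_poly_scale mult.commute)
  qed (simp add: lshift_apply)
  then have "lam_D_eval M (lshift sm c j0 k0 G) l d
      = vec_poly uv_scale M (\<lambda>j. if j0 \<le> j then uv_scale (c * d ^ k0) (D_eval 2 (G (j - j0)) d) else 0) l"
    by simp
  also have "\<dots> = uv_scale (l ^ j0) (vec_poly uv_scale 2 (\<lambda>j. uv_scale (c * d ^ k0) (D_eval 2 (G j) d)) l)"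
  proof (rule W.vec_poly_shift)
    show "uv_scale (c * d ^ k0) (D_eval 2 (G j) d) = 0" if "2 \<le> j" for j
    proof -
      have "G j = 0"
        by (rule ext) (simp add: assms(3) that)
      then show ?thesis by simp
    qed
  qed (use assms in simp)
  also have "\<dots> = uv_scale (c * l ^ j0 * d ^ k0) (lam_D_eval 2 G l d)"
    by (simp add: W.vec_poly_scale mult_ac)
  finally show ?thesis .
qed

lemma gen_br_zero_left [simp]: "gen_br sm br \<beta> 0 m n y t s = 0"
  and gen_br_zero_right [simp]: "gen_br sm br \<beta> x m n 0 t s = 0"
  and lshift_zero [simp]: "lshift sm c j0 k0 0 = 0"
  by (simp_all add: gen_br_def lmono_def lshift_def Let_def gcomp_zero fun_eq_iff)

definition R_br_term :: "'a Relt \<Rightarrow> 'a Relt \<Rightarrow> nat \<Rightarrow> nat \<times> nat \<Rightarrow> nat \<Rightarrow> nat \<times> nat \<Rightarrow> nat \<Rightarrow> nat \<Rightarrow> 'a Relt" where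
  "R_br_term a b K p L q i = lshift sm ((-1) ^ K * of_nat (L choose i)) (K + i) (L - i)
     (gen_br sm br \<beta> (a K (fst p) (snd p)) (fst p) (snd p) (b L (fst q) (snd q)) (fst q) (snd q))"

lemma R_br_box_sum:
  assumes "R_bounded N a" and "R_bounded N b"
  shows "R_br sm br \<beta> a b
    = (\<Sum>K<N. \<Sum>p\<in>{..<N} \<times> {..<N}. \<Sum>L<N. \<Sum>q\<in>{..<N} \<times> {..<N}. \<Sum>i\<le>L. R_br_term a b K p L q i)"
proof -
  let ?box = "{..<N} \<times> {..<N} \<times> {..<N}"
  have supp: "{(K, m, n). r K m n \<noteq> 0} \<subseteq> ?box" if "R_bounded N r" for r :: "'a Relt"
    using that by (auto simp: R_bounded_def)
  have inner: "(\<Sum>(L, t, s)\<in>{(L, t, s). b L t s \<noteq> 0}. \<Sum>i\<le>L.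
      lshift sm ((-1) ^ K * of_nat (L choose i)) (K + i) (L - i) (gen_br sm br \<beta> (a K m n) m n (b L t s) t s))
    = (\<Sum>(L, t, s)\<in>?box. \<Sum>i\<le>L.
      lshift sm ((-1) ^ K * of_nat (L choose i)) (K + i) (L - i) (gen_br sm br \<beta> (a K m n) m n (b L t s) t s))"
    for K m n
    by (rule sum.mono_neutral_left[OF _ supp[OF assms(2)]]) auto
  have "R_br sm br \<beta> a b = (\<Sum>(K, m, n)\<in>?box. \<Sum>(L, t, s)\<in>?box. \<Sum>i\<le>L.
      lshift sm ((-1) ^ K * of_nat (L choose i)) (K + i) (L - i) (gen_br sm br \<beta> (a K m n) m n (b L t s) t s))"
    unfolding R_br_def inner by (rule sum.mono_neutral_left[OF _ supp[OF assms(1)]]) auto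
  then show ?thesis
    by (simp only: sum_triple_split R_br_term_def)
qed

lemma R_br_term_apply: "R_br_term a b K p L q i j k m n
    = (if K + i \<le> j \<and> L - i \<le> k
       then csc sm ((-1) ^ K * of_nat (L choose i))
         (gen_br sm br \<beta> (a K (fst p) (snd p)) (fst p) (snd p) (b L (fst q) (snd q)) (fst q) (snd q)
           (j - (K + i)) (k - (L - i)) m n)
       else 0)"
  by (simp add: R_br_term_def lshift_def)

lemma cE_gen_br: "cE (gen_br sm br \<beta> x m n y t s j k p q) = 0"
  by (simp add: gen_br_def Let_def lmono_def)

lemma R_br_nonzero:
  assumes a: "R_bounded N a" and b: "R_bounded N b" and nz: "R_br sm br \<beta> a b j k p q \<noteq> 0"
  shows "j < 2 * N \<and> k < 2 * N \<and> p < 2 * N \<and> q < 2 * N"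
proof (rule ccontr)
  assume out: "\<not> ?thesis"
  have zero: "R_br_term a b K P L Q i j k p q = 0"
    if "K < N" "P \<in> {..<N} \<times> {..<N}" "L < N" "Q \<in> {..<N} \<times> {..<N}" "i \<le> L" for K P L Q i
  proof (rule ccontr)
    assume "R_br_term a b K P L Q i j k p q \<noteq> 0"
    then have "K + i \<le> j" "L - i \<le> k"
      and "gen_br sm br \<beta> (a K (fst P) (snd P)) (fst P) (snd P) (b L (fst Q) (snd Q)) (fst Q) (snd Q)
        (j - (K + i)) (k - (L - i)) p q \<noteq> 0"
      by (auto simp: R_br_term_apply split: if_splits)
    with that out show False
      by (auto dest!: gen_br_nonzero)
  qed
  have "R_br sm br \<beta> a b j k p q = 0"
    unfolding R_br_box_sum[OF a b] sum_apply by (intro sum.neutral ballI) (auto simp: zero)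
  with nz show False ..
qed

lemma lam_D_bounded_R_br:
  assumes "R_bounded N a" and "R_bounded N b"
  shows "lam_D_bounded (2 * N) (R_br sm br \<beta> a b)"
  unfolding lam_D_bounded_def
proof (intro allI impI)
  fix j k
  assume "R_br sm br \<beta> a b j k \<noteq> 0"
  then obtain p q where "R_br sm br \<beta> a b j k p q \<noteq> 0"
    by (auto simp: fun_eq_iff)
  then show "j < 2 * N \<and> k < 2 * N"
    using R_br_nonzero[OF assms] by blast
qed

lemma R_bounded_R_br:
  assumes "R_bounded N a" and "R_bounded N b"
  shows "R_bounded (2 * N) (R_br sm br \<beta> a b j)"
  using R_br_nonzero[OF assms] unfolding R_bounded_def[of "2 * N"] by blast

lemma R_br_eq_0:
  assumes "R_bounded N a" and "R_bounded N b" and "2 * N \<le> j"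
  shows "R_br sm br \<beta> a b j = 0"
proof
  fix k
  show "R_br sm br \<beta> a b j k = 0 k"
    using lam_D_bounded_eq_0[OF lam_D_bounded_R_br[OF assms(1,2)]] assms(3) by simp
qed

lemma cE_R_br:
  assumes "R_bounded N a" and "R_bounded N b"
  shows "cE (R_br sm br \<beta> a b j k p q) = 0"
proof -
  have cE_sum: "cE (sum f A) = (\<Sum>x\<in>A. cE (f x))" for f :: "_ \<Rightarrow> 'a gcomp" and A
    by (induct A rule: infinite_finite_induct) simp_all
  have "cE (R_br_term a b K P L Q i j k p q) = 0" for K P L Q i
    by (simp add: R_br_term_apply csc_def cE_gen_br)
  then show ?thesis
    unfolding R_br_box_sum[OF assms] sum_apply cE_sum by simp
qed

lemma uv_lbr_D_eval:
  assumes a: "R_bounded N a" and b: "R_bounded N b"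
  shows "uv_lbr (D_eval N a x) (D_eval N b y) l d
    = (\<Sum>K<N. \<Sum>p\<in>{..<N} \<times> {..<N}. \<Sum>L<N. \<Sum>q\<in>{..<N} \<times> {..<N}. uv_scale (x ^ K * y ^ L)
         (gen_lbr (a K (fst p) (snd p)) (fst p) (snd p) (b L (fst q) (snd q)) (fst q) (snd q) l d))"
proof -
  have "uv_lbr (D_eval N a x) (D_eval N b y) l d = (\<Sum>K<N. \<Sum>L<N. uv_scale (x ^ K * y ^ L) (uv_lbr (a K) (b L) l d))"
    by (simp add: vec_poly_def uv_lbr_sum_left uv_lbr_sum_right uv_lbr_scale_left uv_lbr_scale_right
        W.scale_sum_right, subst sum.swap, simp add: mult.commute)
  also have "\<dots> = (\<Sum>K<N. \<Sum>L<N. \<Sum>p\<in>{..<N} \<times> {..<N}. \<Sum>q\<in>{..<N} \<times> {..<N}. uv_scale (x ^ K * y ^ L)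
         (gen_lbr (a K (fst p) (snd p)) (fst p) (snd p) (b L (fst q) (snd q)) (fst q) (snd q) l d))"
    by (simp add: uv_lbr_expand[OF R_bounded_uv_bounded[OF a] R_bounded_uv_bounded[OF b]] uv_lbr_uv_part
        W.scale_sum_right)
  also have "\<dots> = (\<Sum>K<N. \<Sum>p\<in>{..<N} \<times> {..<N}. \<Sum>L<N. \<Sum>q\<in>{..<N} \<times> {..<N}. uv_scale (x ^ K * y ^ L)
         (gen_lbr (a K (fst p) (snd p)) (fst p) (snd p) (b L (fst q) (snd q)) (fst q) (snd q) l d))"
    by (intro sum.cong refl) (rule sum.swap)
  finally show ?thesis .
qed

lemma lam_D_eval_R_br_term:
  assumes "K < N" and "L < N" and "i \<le> L" and "2 * N \<le> M"
  shows "lam_D_eval M (R_br_term a b K p L q i) l d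
    = uv_scale ((-1) ^ K * of_nat (L choose i) * l ^ (K + i) * d ^ (L - i))
        (gen_lbr (a K (fst p) (snd p)) (fst p) (snd p) (b L (fst q) (snd q)) (fst q) (snd q) l d)"
  unfolding R_br_term_def
  by (subst lam_D_eval_lshift) (use assms in \<open>auto simp: gen_br_eq_0 lam_D_eval_gen_br\<close>)

lemma lam_D_eval_R_br:
  assumes a: "R_bounded N a" and b: "R_bounded N b" and "2 * N \<le> M"
  shows "lam_D_eval M (R_br sm br \<beta> a b) l d = uv_lbr (D_eval N a (- l)) (D_eval N b (l + d)) l d"
proof -
  have "lam_D_eval M (R_br sm br \<beta> a b) l d
      = (\<Sum>K<N. \<Sum>p\<in>{..<N} \<times> {..<N}. \<Sum>L<N. \<Sum>q\<in>{..<N} \<times> {..<N}. \<Sum>i\<le>L.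
           lam_D_eval M (R_br_term a b K p L q i) l d)"
    unfolding R_br_box_sum[OF a b] lam_D_eval_sum ..
  also have "\<dots> = (\<Sum>K<N. \<Sum>p\<in>{..<N} \<times> {..<N}. \<Sum>L<N. \<Sum>q\<in>{..<N} \<times> {..<N}. \<Sum>i\<le>L.
      uv_scale ((-1) ^ K * of_nat (L choose i) * l ^ (K + i) * d ^ (L - i))
        (gen_lbr (a K (fst p) (snd p)) (fst p) (snd p) (b L (fst q) (snd q)) (fst q) (snd q) l d))"
    by (intro sum.cong refl lam_D_eval_R_br_term) (use assms in auto)
  also have "\<dots> = (\<Sum>K<N. \<Sum>p\<in>{..<N} \<times> {..<N}. \<Sum>L<N. \<Sum>q\<in>{..<N} \<times> {..<N}.
      uv_scale ((- l) ^ K * (l + d) ^ L)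
        (gen_lbr (a K (fst p) (snd p)) (fst p) (snd p) (b L (fst q) (snd q)) (fst q) (snd q) l d))"
    by (simp only: W.scale_sum_left[symmetric] binomial_minus_power_mult)
  also have "\<dots> = uv_lbr (D_eval N a (- l)) (D_eval N b (l + d)) l d"
    by (rule uv_lbr_D_eval[OF a b, symmetric])
  finally show ?thesis .
qed

lemma D_eval_add: "D_eval M (r + r') x = D_eval M r x + D_eval M r' x"
  and D_eval_uminus: "D_eval M (- r) x = - D_eval M r x"
  by (simp_all add: vec_poly_def W.scale_right_distrib sum.distrib sum_negf)

lemma lam_D_eval_extend:
  assumes "lam_D_bounded M P" and "M \<le> M'"
  shows "lam_D_eval M' P l d = lam_D_eval M P l d"
proof -
  have "D_eval M' (P j) d = D_eval M (P j) d" for j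
    by (rule W.vec_poly_extend) (use assms lam_D_bounded_eq_0 in auto)
  moreover have "D_eval M (P j) d = 0" if "M \<le> j" for j
    using lam_D_bounded_eq_0[OF assms(1)] that by (simp add: vec_poly_def)
  ultimately show ?thesis
    using W.vec_poly_extend[OF _ assms(2)] by simp
qed

lemma lam_D_eval_inj:
  assumes "lam_D_bounded M P" and "lam_D_bounded M Q" and "\<And>l d. lam_D_eval M P l d = lam_D_eval M Q l d"
  shows "P = Q"
proof (rule ext, rule ext)
  fix j k
  show "P j k = Q j k"
  proof (cases "j < M \<and> k < M")
    case True
    have "D_eval M (P j) d = D_eval M (Q j) d" for d
      using vec_poly_coeff_eq[OF W.vector_space_axioms assms(3)] True by blast
    then show ?thesis
      using vec_poly_coeff_eq[OF W.vector_space_axioms] True by blast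
  next
    case False
    then show ?thesis
      using lam_D_bounded_eq_0[OF assms(1)] lam_D_bounded_eq_0[OF assms(2)] by auto
  qed
qed

lemma R_br_zero_left [simp]: "R_br sm br \<beta> 0 b = 0"
  and R_br_zero_right [simp]: "R_br sm br \<beta> a 0 = 0"
  by (simp_all add: R_br_def)

lemma R_br_nonzero_bound:
  assumes "R_bounded N a" and "R_bounded N b" and "R_br sm br \<beta> a b j k \<noteq> 0"
  shows "j < 2 * N \<and> k < 2 * N"
  using lam_D_bounded_R_br[OF assms(1,2)] assms(3) unfolding lam_D_bounded_def by blast

section \<open>The axioms of a Lie conformal algebra\<close>

lemma lam_D_eval_shift:
  assumes "lam_D_bounded M P"
  shows "lam_D_eval (Suc M) (\<lambda>j. case j of 0 \<Rightarrow> 0 | Suc j \<Rightarrow> P j) l d = uv_scale l (lam_D_eval M P l d)"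
proof -
  have "D_eval (Suc M) (case j of 0 \<Rightarrow> 0 | Suc j \<Rightarrow> P j) d = (case j of 0 \<Rightarrow> 0 | Suc j \<Rightarrow> D_eval M (P j) d)" for j
  proof (cases j)
    case (Suc j')
    show ?thesis
      unfolding Suc by (simp add: W.vec_poly_extend lam_D_bounded_eq_0[OF assms])
  qed simp
  then show ?thesis
    by (simp add: W.vec_poly_mult_var)
qed

lemma lam_D_eval_R_D:
  assumes "lam_D_bounded M P"
  shows "lam_D_eval (Suc M) (\<lambda>j. R_D (P j)) l d = uv_scale d (lam_D_eval M P l d)"
proof -
  have "lam_D_eval (Suc M) (\<lambda>j. R_D (P j)) l d = vec_poly uv_scale (Suc M) (\<lambda>j. uv_scale d (D_eval M (P j) d)) l"
    by (simp add: D_eval_R_D)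
  also have "\<dots> = vec_poly uv_scale M (\<lambda>j. uv_scale d (D_eval M (P j) d)) l"
    by (rule W.vec_poly_extend) (use lam_D_bounded_eq_0[OF assms] in \<open>auto simp: vec_poly_def\<close>)
  finally show ?thesis
    by (simp add: W.vec_poly_scale)
qed

lemma R_br_add_left:
  assumes "R_bounded N a" and "R_bounded N b" and "R_bounded N c"
  shows "R_br sm br \<beta> (a + b) c = R_br sm br \<beta> a c + R_br sm br \<beta> b c"
proof (rule lam_D_eval_inj[where M = "2 * N"])
  show "lam_D_bounded (2 * N) (R_br sm br \<beta> (a + b) c)"
    by (intro lam_D_bounded_R_br R_bounded_add assms)
  show "lam_D_bounded (2 * N) (R_br sm br \<beta> a c + R_br sm br \<beta> b c)"
    using lam_D_bounded_add[OF lam_D_bounded_R_br[OF assms(1,3)] lam_D_bounded_R_br[OF assms(2,3)]]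
    by (simp add: plus_fun_def)
  show "lam_D_eval (2 * N) (R_br sm br \<beta> (a + b) c) l d = lam_D_eval (2 * N) (R_br sm br \<beta> a c + R_br sm br \<beta> b c) l d"
    for l d
    using lam_D_eval_R_br[OF R_bounded_add[OF assms(1,2)] assms(3) order_refl]
      lam_D_eval_R_br[OF assms(1,3) order_refl] lam_D_eval_R_br[OF assms(2,3) order_refl]
    by (simp add: D_eval_add uv_lbr_add_left W.vec_poly_add)
qed

lemma R_br_add_right:
  assumes "R_bounded N a" and "R_bounded N b" and "R_bounded N c"
  shows "R_br sm br \<beta> a (b + c) = R_br sm br \<beta> a b + R_br sm br \<beta> a c"
proof (rule lam_D_eval_inj[where M = "2 * N"])
  show "lam_D_bounded (2 * N) (R_br sm br \<beta> a (b + c))"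
    by (intro lam_D_bounded_R_br R_bounded_add assms)
  show "lam_D_bounded (2 * N) (R_br sm br \<beta> a b + R_br sm br \<beta> a c)"
    using lam_D_bounded_add[OF lam_D_bounded_R_br[OF assms(1,2)] lam_D_bounded_R_br[OF assms(1,3)]]
    by (simp add: plus_fun_def)
  show "lam_D_eval (2 * N) (R_br sm br \<beta> a (b + c)) l d = lam_D_eval (2 * N) (R_br sm br \<beta> a b + R_br sm br \<beta> a c) l d"
    for l d
    using lam_D_eval_R_br[OF assms(1) R_bounded_add[OF assms(2,3)] order_refl]
      lam_D_eval_R_br[OF assms(1,2) order_refl] lam_D_eval_R_br[OF assms(1,3) order_refl]
    by (simp add: D_eval_add uv_lbr_add_right W.vec_poly_add)
qed

lemma lam_D_bounded_R_sc: "lam_D_bounded M P \<Longrightarrow> lam_D_bounded M (\<lambda>j. R_sc sm z (P j))"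
  unfolding lam_D_bounded_def by (metis R_sc_apply W.scale_zero_right)

lemma R_br_scale_left:
  assumes "R_bounded N a" and "R_bounded N b"
  shows "R_br sm br \<beta> (R_sc sm z a) b = (\<lambda>j. R_sc sm z (R_br sm br \<beta> a b j))"
proof (rule lam_D_eval_inj[where M = "2 * N"])
  show "lam_D_bounded (2 * N) (R_br sm br \<beta> (R_sc sm z a) b)"
    by (intro lam_D_bounded_R_br R_bounded_R_sc assms)
  show "lam_D_bounded (2 * N) (\<lambda>j. R_sc sm z (R_br sm br \<beta> a b j))"
    by (intro lam_D_bounded_R_sc lam_D_bounded_R_br assms)
  show "lam_D_eval (2 * N) (R_br sm br \<beta> (R_sc sm z a) b) l d
      = lam_D_eval (2 * N) (\<lambda>j. R_sc sm z (R_br sm br \<beta> a b j)) l d" for l d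
    using lam_D_eval_R_br[OF R_bounded_R_sc[OF assms(1)] assms(2) order_refl] lam_D_eval_R_br[OF assms order_refl]
    by (simp add: D_eval_R_sc uv_lbr_scale_left W.vec_poly_scale)
qed

lemma R_br_scale_right:
  assumes "R_bounded N a" and "R_bounded N b"
  shows "R_br sm br \<beta> a (R_sc sm z b) = (\<lambda>j. R_sc sm z (R_br sm br \<beta> a b j))"
proof (rule lam_D_eval_inj[where M = "2 * N"])
  show "lam_D_bounded (2 * N) (R_br sm br \<beta> a (R_sc sm z b))"
    by (intro lam_D_bounded_R_br R_bounded_R_sc assms)
  show "lam_D_bounded (2 * N) (\<lambda>j. R_sc sm z (R_br sm br \<beta> a b j))"
    by (intro lam_D_bounded_R_sc lam_D_bounded_R_br assms)
  show "lam_D_eval (2 * N) (R_br sm br \<beta> a (R_sc sm z b)) l d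
      = lam_D_eval (2 * N) (\<lambda>j. R_sc sm z (R_br sm br \<beta> a b j)) l d" for l d
    using lam_D_eval_R_br[OF assms(1) R_bounded_R_sc[OF assms(2)] order_refl] lam_D_eval_R_br[OF assms order_refl]
    by (simp add: D_eval_R_sc uv_lbr_scale_right W.vec_poly_scale)
qed

lemma R_br_R_D_left:
  assumes "R_bounded N a" and "R_bounded N b"
  shows "R_br sm br \<beta> (R_D a) b = (\<lambda>j. case j of 0 \<Rightarrow> 0 | Suc j \<Rightarrow> - R_br sm br \<beta> a b j)"
proof (rule lam_D_eval_inj[where M = "2 * Suc N"])
  have a': "R_bounded (Suc N) (R_D a)" and b': "R_bounded (Suc N) b"
    using R_bounded_R_D[OF assms(1)] R_bounded_mono[OF assms(2)] by simp_all
  have P: "lam_D_bounded (2 * N) (\<lambda>j. - R_br sm br \<beta> a b j)"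
    by (intro lam_D_bounded_uminus lam_D_bounded_R_br assms)
  have Q: "lam_D_bounded (Suc (2 * N)) (\<lambda>j. case j of 0 \<Rightarrow> 0 | Suc j \<Rightarrow> - R_br sm br \<beta> a b j)"
    using lam_D_bounded_shift[OF P] by simp
  show "lam_D_bounded (2 * Suc N) (R_br sm br \<beta> (R_D a) b)"
    by (rule lam_D_bounded_R_br[OF a' b'])
  show "lam_D_bounded (2 * Suc N) (\<lambda>j. case j of 0 \<Rightarrow> 0 | Suc j \<Rightarrow> - R_br sm br \<beta> a b j)"
    by (rule lam_D_bounded_mono[OF Q]) simp
  fix l d
  have "lam_D_eval (2 * Suc N) (R_br sm br \<beta> (R_D a) b) l d
      = uv_scale (- l) (lam_D_eval (2 * N) (R_br sm br \<beta> a b) l d)"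
    using lam_D_eval_R_br[OF a' b' order_refl] lam_D_eval_R_br[OF assms order_refl]
    by (simp add: D_eval_R_D D_eval_extend[OF assms(2), of "Suc N"] uv_lbr_scale_left del: W.scale_minus_left)
  also have "\<dots> = lam_D_eval (Suc (2 * N)) (\<lambda>j. case j of 0 \<Rightarrow> 0 | Suc j \<Rightarrow> - R_br sm br \<beta> a b j) l d"
    using lam_D_eval_shift[OF P] by (simp add: D_eval_uminus W.vec_poly_uminus)
  also have "\<dots> = lam_D_eval (2 * Suc N) (\<lambda>j. case j of 0 \<Rightarrow> 0 | Suc j \<Rightarrow> - R_br sm br \<beta> a b j) l d"
    by (rule lam_D_eval_extend[OF Q, symmetric]) simp
  finally show "lam_D_eval (2 * Suc N) (R_br sm br \<beta> (R_D a) b) l d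
      = lam_D_eval (2 * Suc N) (\<lambda>j. case j of 0 \<Rightarrow> 0 | Suc j \<Rightarrow> - R_br sm br \<beta> a b j) l d" .
qed

lemma R_br_R_D_right:
  assumes "R_bounded N a" and "R_bounded N b"
  shows "R_br sm br \<beta> a (R_D b)
    = (\<lambda>j. (case j of 0 \<Rightarrow> 0 | Suc j \<Rightarrow> R_br sm br \<beta> a b j) + R_D (R_br sm br \<beta> a b j))"
proof (rule lam_D_eval_inj[where M = "2 * Suc N"])
  have a': "R_bounded (Suc N) a" and b': "R_bounded (Suc N) (R_D b)"
    using R_bounded_mono[OF assms(1)] R_bounded_R_D[OF assms(2)] by simp_all
  have P: "lam_D_bounded (2 * N) (R_br sm br \<beta> a b)"
    by (rule lam_D_bounded_R_br[OF assms])
  have Q1: "lam_D_bounded (2 * Suc N) (\<lambda>j. case j of 0 \<Rightarrow> 0 | Suc j \<Rightarrow> R_br sm br \<beta> a b j)"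
    and Q2: "lam_D_bounded (2 * Suc N) (\<lambda>j. R_D (R_br sm br \<beta> a b j))"
    by (rule lam_D_bounded_mono[OF lam_D_bounded_shift[OF P]] lam_D_bounded_mono[OF lam_D_bounded_R_D[OF P]];
        simp)+
  show "lam_D_bounded (2 * Suc N) (R_br sm br \<beta> a (R_D b))"
    by (rule lam_D_bounded_R_br[OF a' b'])
  show "lam_D_bounded (2 * Suc N)
      (\<lambda>j. (case j of 0 \<Rightarrow> 0 | Suc j \<Rightarrow> R_br sm br \<beta> a b j) + R_D (R_br sm br \<beta> a b j))"
    by (rule lam_D_bounded_add[OF Q1 Q2])
  fix l d
  have "lam_D_eval (2 * Suc N) (R_br sm br \<beta> a (R_D b)) l d
      = uv_scale (l + d) (lam_D_eval (2 * N) (R_br sm br \<beta> a b) l d)"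
    using lam_D_eval_R_br[OF a' b' order_refl] lam_D_eval_R_br[OF assms order_refl]
    by (simp add: D_eval_R_D D_eval_extend[OF assms(1), of "Suc N"] uv_lbr_scale_right)
  also have "\<dots> = lam_D_eval (Suc (2 * N)) (\<lambda>j. case j of 0 \<Rightarrow> 0 | Suc j \<Rightarrow> R_br sm br \<beta> a b j) l d
      + lam_D_eval (Suc (2 * N)) (\<lambda>j. R_D (R_br sm br \<beta> a b j)) l d"
    by (simp add: lam_D_eval_shift[OF P] lam_D_eval_R_D[OF P] W.scale_left_distrib)
  also have "\<dots> = lam_D_eval (2 * Suc N)
      (\<lambda>j. (case j of 0 \<Rightarrow> 0 | Suc j \<Rightarrow> R_br sm br \<beta> a b j) + R_D (R_br sm br \<beta> a b j)) l d"
    using lam_D_eval_extend[OF lam_D_bounded_shift[OF P], of "2 * Suc N"]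
      lam_D_eval_extend[OF lam_D_bounded_R_D[OF P], of "2 * Suc N"]
    by (simp add: D_eval_add W.vec_poly_add)
  finally show "lam_D_eval (2 * Suc N) (R_br sm br \<beta> a (R_D b)) l d = lam_D_eval (2 * Suc N)
      (\<lambda>j. (case j of 0 \<Rightarrow> 0 | Suc j \<Rightarrow> R_br sm br \<beta> a b j) + R_D (R_br sm br \<beta> a b j)) l d" .
qed

lemma R_D_pow_apply: "(R_D ^^ e) r = (\<lambda>k. if e \<le> k then r (k - e) else 0)"
proof (induction e)
  case (Suc e)
  then show ?case
    by (auto simp: R_D_def fun_eq_iff split: nat.split)
qed (simp add: fun_eq_iff)

lemma R_D_pow_zero [simp]: "(R_D ^^ e) 0 = 0"
  by (simp add: R_D_pow_apply fun_eq_iff)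

lemma D_eval_R_D_pow:
  assumes "\<And>k. B \<le> k \<Longrightarrow> r k = 0" and "B + e \<le> M"
  shows "D_eval M ((R_D ^^ e) r) x = uv_scale (x ^ e) (D_eval B r x)"
  unfolding R_D_pow_apply by (rule W.vec_poly_shift) (use assms in \<open>simp_all add: fun_eq_iff\<close>)

definition lam_skew :: "nat \<Rightarrow> (nat \<Rightarrow> 'a Relt) \<Rightarrow> nat \<Rightarrow> 'a Relt" where
  "lam_skew M P j = (\<Sum>i<M. R_sc sm ((-1) ^ i * of_nat (i choose j)) ((R_D ^^ (i - j)) (P i)))"

lemma lam_D_bounded_lam_skew:
  assumes "lam_D_bounded M P"
  shows "lam_D_bounded (2 * M) (lam_skew M P)"
  unfolding lam_D_bounded_def
proof (intro allI impI)
  fix j k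
  assume "lam_skew M P j k \<noteq> 0"
  then have "(\<Sum>i<M. uv_scale ((-1) ^ i * of_nat (i choose j)) ((R_D ^^ (i - j)) (P i) k)) \<noteq> 0"
    by (simp add: lam_skew_def sum_apply R_sc_apply)
  then obtain i where "i < M" and nz: "uv_scale ((-1) ^ i * of_nat (i choose j)) ((R_D ^^ (i - j)) (P i) k) \<noteq> 0"
    by (meson lessThan_iff sum.not_neutral_contains_not_neutral)
  from nz have "j \<le> i"
    by (metis W.scale_zero_left binomial_eq_0 mult_zero_right not_le of_nat_0)
  moreover from nz have "i - j \<le> k" and "P i (k - (i - j)) \<noteq> 0"
    by (auto simp: R_D_pow_apply split: if_splits)
  moreover from this(2) have "k - (i - j) < M"
    using assms unfolding lam_D_bounded_def by blast
  ultimately show "j < 2 * M \<and> k < 2 * M"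
    using \<open>i < M\<close> by linarith
qed

lemma lam_D_eval_lam_skew:
  assumes "lam_D_bounded M P"
  shows "lam_D_eval (2 * M) (lam_skew M P) l d = lam_D_eval M P (- l - d) d"
proof -
  let ?c = "\<lambda>i j. (-1) ^ i * of_nat (i choose j) * d ^ (i - j) :: complex"
  have "D_eval (2 * M) (lam_skew M P j) d = (\<Sum>i<M. uv_scale (?c i j) (D_eval M (P i) d))" for j
    unfolding lam_skew_def W.vec_poly_sum_fun D_eval_R_sc
    by (intro sum.cong refl, subst D_eval_R_D_pow[where B = M])
      (use lam_D_bounded_eq_0[OF assms] in auto)
  then have "lam_D_eval (2 * M) (lam_skew M P) l d
      = vec_poly uv_scale (2 * M) (\<lambda>j. \<Sum>i<M. uv_scale (?c i j) (D_eval M (P i) d)) l"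
    by simp
  also have "\<dots> = (\<Sum>j<2 * M. \<Sum>i<M. uv_scale (l ^ j * ?c i j) (D_eval M (P i) d))"
    by (simp only: vec_poly_def[of uv_scale "2 * M"] W.scale_sum_right W.scale_scale)
  also have "\<dots> = (\<Sum>i<M. \<Sum>j<2 * M. uv_scale (l ^ j * ?c i j) (D_eval M (P i) d))"
    by (rule sum.swap)
  also have "\<dots> = (\<Sum>i<M. uv_scale ((- l - d) ^ i) (D_eval M (P i) d))"
  proof (intro sum.cong refl)
    fix i
    assume "i \<in> {..<M}"
    then have "(\<Sum>j<2 * M. l ^ j * ?c i j) = (\<Sum>j\<le>i. l ^ j * ?c i j)"
      by (intro sum.mono_neutral_right) auto
    also have "\<dots> = (- l - d) ^ i"
      by (simp add: binomial_minus_sum mult_ac)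
    finally show "(\<Sum>j<2 * M. uv_scale (l ^ j * ?c i j) (D_eval M (P i) d)) = uv_scale ((- l - d) ^ i) (D_eval M (P i) d)"
      by (simp add: W.scale_sum_left[symmetric])
  qed
  also have "\<dots> = lam_D_eval M P (- l - d) d"
    by (simp only: vec_poly_def[of uv_scale M _ "- l - d"])
  finally show ?thesis .
qed

lemma R_br_skew:
  assumes "R_bounded N a" and "R_bounded N b"
  shows "R_br sm br \<beta> a b = (\<lambda>j. - (\<Sum>i\<in>{i. R_br sm br \<beta> b a i \<noteq> 0}.
    R_sc sm ((-1) ^ i * of_nat (i choose j)) ((R_D ^^ (i - j)) (R_br sm br \<beta> b a i))))"
proof -
  let ?P = "R_br sm br \<beta> b a"
  have P: "lam_D_bounded (2 * N) ?P"
    by (rule lam_D_bounded_R_br[OF assms(2,1)])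
  have "R_br sm br \<beta> a b = (\<lambda>j. - lam_skew (2 * N) ?P j)"
  proof (rule lam_D_eval_inj[where M = "4 * N"])
    show "lam_D_bounded (4 * N) (R_br sm br \<beta> a b)"
      by (rule lam_D_bounded_mono[OF lam_D_bounded_R_br[OF assms]]) simp
    show "lam_D_bounded (4 * N) (\<lambda>j. - lam_skew (2 * N) ?P j)"
      using lam_D_bounded_uminus[OF lam_D_bounded_lam_skew[OF P]] by simp
    fix l d
    have "lam_D_eval (4 * N) (\<lambda>j. - lam_skew (2 * N) ?P j) l d = - lam_D_eval (2 * N) ?P (- l - d) d"
      using lam_D_eval_lam_skew[OF P, where l = l and d = d] by (simp add: D_eval_uminus W.vec_poly_uminus)
    also have "\<dots> = uv_lbr (D_eval N a (- l)) (D_eval N b (l + d)) l d"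
      using lam_D_eval_R_br[OF assms(2,1) order_refl, where l = "- l - d" and d = d]
        uv_lbr_skew[OF uv_bounded_D_eval[OF assms(1)] uv_bounded_D_eval[OF assms(2)]]
      by (simp add: add.commute)
    also have "\<dots> = lam_D_eval (4 * N) (R_br sm br \<beta> a b) l d"
      using lam_D_eval_R_br[OF assms order_refl] lam_D_eval_extend[OF lam_D_bounded_R_br[OF assms], of "4 * N"]
      by simp
    finally show "lam_D_eval (4 * N) (R_br sm br \<beta> a b) l d = lam_D_eval (4 * N) (\<lambda>j. - lam_skew (2 * N) ?P j) l d"
      by simp
  qed
  moreover have "lam_skew (2 * N) ?P j
      = (\<Sum>i\<in>{i. ?P i \<noteq> 0}. R_sc sm ((-1) ^ i * of_nat (i choose j)) ((R_D ^^ (i - j)) (?P i)))" for j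
    unfolding lam_skew_def
    by (rule sum.mono_neutral_right) (use R_br_eq_0[OF assms(2,1)] in \<open>auto simp: not_less\<close>)
  ultimately show ?thesis
    by simp
qed

lemma R_br_right_nested_nonzero:
  assumes "R_bounded N a" and "R_bounded N b" and "R_bounded N c"
    and nz: "R_br sm br \<beta> a (R_br sm br \<beta> b c q) p k \<noteq> 0"
  shows "p < 4 * N \<and> q < 2 * N \<and> k < 4 * N"
proof -
  have "R_br sm br \<beta> b c q \<noteq> 0"
    using nz by auto
  then have "q < 2 * N"
    using R_br_eq_0[OF assms(2,3)] not_less by blast
  moreover have "R_bounded (2 * N) a"
    by (rule R_bounded_mono[OF assms(1)]) simp
  ultimately show ?thesis
    using R_br_nonzero_bound[OF _ R_bounded_R_br[OF assms(2,3)] nz] by simp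
qed

lemma R_br_left_nested_nonzero:
  assumes "R_bounded N a" and "R_bounded N b" and "R_bounded N c"
    and nz: "R_br sm br \<beta> (R_br sm br \<beta> a b j) c r k \<noteq> 0"
  shows "j < 2 * N \<and> r < 4 * N \<and> k < 4 * N"
proof -
  have "R_br sm br \<beta> a b j \<noteq> 0"
    using nz by auto
  then have "j < 2 * N"
    using R_br_eq_0[OF assms(1,2)] not_less by blast
  moreover have "R_bounded (2 * N) c"
    by (rule R_bounded_mono[OF assms(3)]) simp
  ultimately show ?thesis
    using R_br_nonzero_bound[OF R_bounded_R_br[OF assms(1,2)] _ nz] by simp
qed

abbreviation lam_mu_D_eval :: "nat \<Rightarrow> (nat \<Rightarrow> nat \<Rightarrow> 'a Relt) \<Rightarrow> complex \<Rightarrow> complex \<Rightarrow> complex \<Rightarrow> 'a uv" where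
  "lam_mu_D_eval M F l \<mu> d \<equiv> vec_poly uv_scale M (\<lambda>p. lam_D_eval M (F p) \<mu> d) l"

lemma lam_mu_D_eval_inj:
  assumes "\<And>p q k. F p q k \<noteq> 0 \<Longrightarrow> p < M \<and> q < M \<and> k < M"
    and "\<And>p q k. G p q k \<noteq> 0 \<Longrightarrow> p < M \<and> q < M \<and> k < M"
    and "\<And>l \<mu> d. lam_mu_D_eval M F l \<mu> d = lam_mu_D_eval M G l \<mu> d"
  shows "F = G"
proof
  fix p
  show "F p = G p"
  proof (cases "p < M")
    case True
    have "lam_D_eval M (F p) \<mu> d = lam_D_eval M (G p) \<mu> d" for \<mu> d
      using vec_poly_coeff_eq[OF W.vector_space_axioms, of M "\<lambda>p. lam_D_eval M (F p) \<mu> d"] assms(3) True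
      by blast
    then show ?thesis
      by (rule lam_D_eval_inj[rotated 2]) (use assms(1,2) in \<open>auto simp: lam_D_bounded_def\<close>)
  next
    case False
    then have "F p q k = 0" "G p q k = 0" for q k
      using assms(1)[of p q k] assms(2)[of p q k] by auto
    then show ?thesis
      by (intro ext) simp
  qed
qed

lemma lam_mu_D_eval_R_br_nested:
  assumes a: "R_bounded N a" and b: "R_bounded N b" and c: "R_bounded N c" and M: "8 * N \<le> M"
  shows "lam_mu_D_eval M (\<lambda>p q. R_br sm br \<beta> a (R_br sm br \<beta> b c q) p) l \<mu> d
    = uv_lbr (D_eval N a (- l)) (uv_lbr (D_eval N b (- \<mu>)) (D_eval N c (\<mu> + (l + d))) \<mu> (l + d)) l d"
proof -
  let ?X = "R_br sm br \<beta> b c"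
  have a2: "R_bounded (2 * N) a"
    by (rule R_bounded_mono[OF a]) simp
  have X: "R_bounded (2 * N) (?X q)" for q
    by (rule R_bounded_R_br[OF b c])
  have "lam_mu_D_eval M (\<lambda>p q. R_br sm br \<beta> a (?X q) p) l \<mu> d
      = vec_poly uv_scale M (\<lambda>q. lam_D_eval M (R_br sm br \<beta> a (?X q)) l d) \<mu>"
    by (rule W.vec_poly_swap)
  also have "\<dots> = vec_poly uv_scale M (\<lambda>q. uv_lbr (D_eval N a (- l)) (D_eval (2 * N) (?X q) (l + d)) l d) \<mu>"
    using lam_D_eval_R_br[OF a2 X] M D_eval_extend[OF a, of "2 * N"] by simp
  also have "\<dots> = uv_lbr (D_eval N a (- l)) (vec_poly uv_scale M (\<lambda>q. D_eval (2 * N) (?X q) (l + d)) \<mu>) l d"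
    by (simp add: vec_poly_def uv_lbr_sum_right uv_lbr_scale_right)
  also have "vec_poly uv_scale M (\<lambda>q. D_eval (2 * N) (?X q) (l + d)) \<mu> = lam_D_eval (2 * N) ?X \<mu> (l + d)"
    by (rule W.vec_poly_extend) (use R_br_eq_0[OF b c] M in auto)
  also have "\<dots> = uv_lbr (D_eval N b (- \<mu>)) (D_eval N c (\<mu> + (l + d))) \<mu> (l + d)"
    by (rule lam_D_eval_R_br[OF b c order_refl])
  finally show ?thesis .
qed

lemma lam_mu_D_eval_R_br_assoc:
  assumes a: "R_bounded N a" and b: "R_bounded N b" and c: "R_bounded N c" and M: "8 * N \<le> M"
  shows "lam_mu_D_eval M (\<lambda>p q. \<Sum>j\<le>p. R_sc sm (of_nat ((p + q - j) choose q))
      (R_br sm br \<beta> (R_br sm br \<beta> a b j) c (p + q - j))) l \<mu> d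
    = uv_lbr (uv_lbr (D_eval N a (- l)) (D_eval N b (- \<mu>)) l (- l - \<mu>)) (D_eval N c (l + \<mu> + d)) (l + \<mu>) d"
proof -
  let ?Z = "R_br sm br \<beta> a b"
  have Z: "R_bounded (2 * N) (?Z j)" for j
    by (rule R_bounded_R_br[OF a b])
  have c2: "R_bounded (2 * N) c"
    by (rule R_bounded_mono[OF c]) simp
  define w where "w j r = D_eval M (R_br sm br \<beta> (?Z j) c r) d" for j r
  have w_nonzero: "j < 4 * N \<and> r < 4 * N" if w: "w j r \<noteq> 0" for j r
  proof -
    have "R_br sm br \<beta> (?Z j) c r \<noteq> 0"
      using w by (auto simp: w_def)
    then obtain k where "R_br sm br \<beta> (?Z j) c r k \<noteq> 0"
      by (metis ext zero_fun_apply)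
    then show ?thesis
      using R_br_left_nested_nonzero[OF a b c] by fastforce
  qed
  have "D_eval M (\<Sum>j\<le>p. R_sc sm (of_nat ((p + q - j) choose q)) (R_br sm br \<beta> (?Z j) c (p + q - j))) d
      = (\<Sum>j\<le>p. uv_scale (of_nat ((p + q - j) choose q)) (w j (p + q - j)))" for p q
    by (simp add: w_def W.vec_poly_sum_fun D_eval_R_sc)
  then have "lam_mu_D_eval M (\<lambda>p q. \<Sum>j\<le>p. R_sc sm (of_nat ((p + q - j) choose q))
      (R_br sm br \<beta> (?Z j) c (p + q - j))) l \<mu> d
      = (\<Sum>p<M. \<Sum>q<M. \<Sum>j\<le>p. uv_scale (l ^ p * \<mu> ^ q * of_nat ((p + q - j) choose q)) (w j (p + q - j)))"
    by (simp add: vec_poly_def W.scale_sum_right mult.assoc)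
  also have "\<dots> = (\<Sum>j<4 * N. \<Sum>r<4 * N. uv_scale (l ^ j * (l + \<mu>) ^ r) (w j r))"
    by (rule W.binomial_reindex) (use w_nonzero M in auto)
  also have "\<dots> = (\<Sum>j<4 * N. uv_scale (l ^ j) (lam_D_eval (4 * N) (R_br sm br \<beta> (?Z j) c) (l + \<mu>) d))"
  proof -
    have "w j r = D_eval (4 * N) (R_br sm br \<beta> (?Z j) c r) d" for j r
      unfolding w_def using D_eval_extend[OF R_bounded_R_br[OF Z c2], of M] M by simp
    then show ?thesis
      by (simp only: vec_poly_def[of uv_scale "4 * N" _ "l + \<mu>"] W.scale_sum_right W.scale_scale)
  qed
  also have "\<dots> = (\<Sum>j<4 * N. uv_scale (l ^ j)
      (uv_lbr (D_eval (2 * N) (?Z j) (- (l + \<mu>))) (D_eval (2 * N) c (l + \<mu> + d)) (l + \<mu>) d))"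
    by (simp add: lam_D_eval_R_br[OF Z c2, of "4 * N"])
  also have "\<dots> = uv_lbr (vec_poly uv_scale (4 * N) (\<lambda>j. D_eval (2 * N) (?Z j) (- (l + \<mu>))) l)
      (D_eval (2 * N) c (l + \<mu> + d)) (l + \<mu>) d"
    by (simp only: vec_poly_def[of uv_scale "4 * N" _ l] uv_lbr_sum_left uv_lbr_scale_left)
  also have "vec_poly uv_scale (4 * N) (\<lambda>j. D_eval (2 * N) (?Z j) (- (l + \<mu>))) l = lam_D_eval (2 * N) ?Z l (- (l + \<mu>))"
    by (rule W.vec_poly_extend) (use R_br_eq_0[OF a b] in auto)
  also have "\<dots> = uv_lbr (D_eval N a (- l)) (D_eval N b (- \<mu>)) l (- l - \<mu>)"
    using lam_D_eval_R_br[OF a b order_refl, where l = l and d = "- (l + \<mu>)"] by simp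
  finally show ?thesis
    using D_eval_extend[OF c, of "2 * N"] by simp
qed

lemma R_br_jacobi:
  assumes a: "R_bounded N a" and b: "R_bounded N b" and c: "R_bounded N c"
  shows "(\<lambda>p q. R_br sm br \<beta> a (R_br sm br \<beta> b c q) p)
    = (\<lambda>p q. R_br sm br \<beta> b (R_br sm br \<beta> a c p) q
        + (\<Sum>j\<le>p. R_sc sm (of_nat ((p + q - j) choose q)) (R_br sm br \<beta> (R_br sm br \<beta> a b j) c (p + q - j))))"
proof (rule lam_mu_D_eval_inj[where M = "8 * N"])
  show "p < 8 * N \<and> q < 8 * N \<and> k < 8 * N" if "R_br sm br \<beta> a (R_br sm br \<beta> b c q) p k \<noteq> 0" for p q k
    using R_br_right_nested_nonzero[OF a b c that] by simp
  show "p < 8 * N \<and> q < 8 * N \<and> k < 8 * N"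
    if nz: "(R_br sm br \<beta> b (R_br sm br \<beta> a c p) q
        + (\<Sum>j\<le>p. R_sc sm (of_nat ((p + q - j) choose q)) (R_br sm br \<beta> (R_br sm br \<beta> a b j) c (p + q - j)))) k \<noteq> 0"
    for p q k
  proof (cases "R_br sm br \<beta> b (R_br sm br \<beta> a c p) q k = 0")
    case True
    with nz have "(\<Sum>j\<le>p. R_sc sm (of_nat ((p + q - j) choose q))
        (R_br sm br \<beta> (R_br sm br \<beta> a b j) c (p + q - j)) k) \<noteq> 0"
      by (simp add: sum_apply)
    then obtain j where "j \<le> p"
      and "R_sc sm (of_nat ((p + q - j) choose q)) (R_br sm br \<beta> (R_br sm br \<beta> a b j) c (p + q - j)) k \<noteq> 0"
      by (meson atMost_iff sum.not_neutral_contains_not_neutral)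
    then have "R_br sm br \<beta> (R_br sm br \<beta> a b j) c (p + q - j) k \<noteq> 0"
      by (auto simp: R_sc_apply)
    then show ?thesis
      using R_br_left_nested_nonzero[OF a b c] \<open>j \<le> p\<close> by fastforce
  next
    case False
    then show ?thesis
      using R_br_right_nested_nonzero[OF b a c] by fastforce
  qed
  fix l \<mu> d :: complex
  have args: "\<mu> + (l + d) = l + \<mu> + d" "l + (\<mu> + d) = l + \<mu> + d"
    by (simp_all add: ac_simps)
  have swap: "lam_mu_D_eval (8 * N) (\<lambda>p q. R_br sm br \<beta> b (R_br sm br \<beta> a c p) q) l \<mu> d
      = lam_mu_D_eval (8 * N) (\<lambda>q p. R_br sm br \<beta> b (R_br sm br \<beta> a c p) q) \<mu> l d"
    by (rule W.vec_poly_swap)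
  show "lam_mu_D_eval (8 * N) (\<lambda>p q. R_br sm br \<beta> a (R_br sm br \<beta> b c q) p) l \<mu> d
    = lam_mu_D_eval (8 * N) (\<lambda>p q. R_br sm br \<beta> b (R_br sm br \<beta> a c p) q
        + (\<Sum>j\<le>p. R_sc sm (of_nat ((p + q - j) choose q)) (R_br sm br \<beta> (R_br sm br \<beta> a b j) c (p + q - j)))) l \<mu> d"
    unfolding D_eval_add W.vec_poly_add swap lam_mu_D_eval_R_br_nested[OF a b c order_refl]
      lam_mu_D_eval_R_br_nested[OF b a c order_refl] lam_mu_D_eval_R_br_assoc[OF a b c order_refl] args
    by (rule uv_lbr_jacobi[OF uv_bounded_D_eval[OF a] uv_bounded_D_eval[OF b] uv_bounded_D_eval[OF c]])
qed

lemma R_carrier_R_sc: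
  assumes "r \<in> R_carrier"
  shows "R_sc sm z r \<in> R_carrier"
proof -
  obtain N where "R_bounded N r"
    using assms R_carrier_bounded by blast
  then have "R_bounded N (R_sc sm z r)"
    by (rule R_bounded_R_sc)
  moreover have "cE (R_sc sm z r k 0 0) = 0" for k
    using assms by (simp add: R_carrier_iff R_sc_def csc_def)
  ultimately show ?thesis
    unfolding R_carrier_iff by blast
qed

lemma R_D_R_sc: "R_D (R_sc sm z r) = R_sc sm z (R_D r)"
  by (simp add: R_D_def R_sc_def fun_eq_iff split: nat.split)

lemma R_carrier_R_br:
  assumes "a \<in> R_carrier" and "b \<in> R_carrier"
  shows "R_br sm br \<beta> a b j \<in> R_carrier" and "finite {j. R_br sm br \<beta> a b j \<noteq> 0}"
proof -
  obtain N where "R_bounded N a" and "R_bounded N b"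
    using R_carrier_obtain_bound[OF assms assms(1)] .
  then show "R_br sm br \<beta> a b j \<in> R_carrier"
    unfolding R_carrier_iff using R_bounded_R_br cE_R_br by blast
  have "{j. R_br sm br \<beta> a b j \<noteq> 0} \<subseteq> {..<2 * N}"
    using R_br_eq_0[OF \<open>R_bounded N a\<close> \<open>R_bounded N b\<close>] by (auto simp: not_less[symmetric])
  then show "finite {j. R_br sm br \<beta> a b j \<noteq> 0}"
    using finite_subset by blast
qed

lemma lie_conformal_algebra_R: "lie_conformal_algebra R_carrier (R_sc sm) R_D (R_br sm br \<beta>)"
  unfolding lie_conformal_algebra_def
proof (intro conjI ballI allI)
  fix a b c :: "'a Relt" and z j p q
  assume a: "a \<in> R_carrier" and b: "b \<in> R_carrier" and c: "c \<in> R_carrier"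
  obtain N where aN: "R_bounded N a" and bN: "R_bounded N b" and cN: "R_bounded N c"
    using R_carrier_obtain_bound[OF a b c] .
  show "a + b \<in> R_carrier" and "R_sc sm z a \<in> R_carrier" and "R_D a \<in> R_carrier"
    using R_carrier_add[OF a b] R_carrier_R_sc[OF a] R_carrier_R_D[OF a] .
  show "R_D (a + b) = R_D a + R_D b" and "R_D (R_sc sm z a) = R_sc sm z (R_D a)"
    by (rule R_D_add R_D_R_sc)+
  show "R_br sm br \<beta> a b j \<in> R_carrier" and "finite {j. R_br sm br \<beta> a b j \<noteq> 0}"
    using R_carrier_R_br[OF a b] .
  show "R_br sm br \<beta> (a + b) c j = R_br sm br \<beta> a c j + R_br sm br \<beta> b c j"
    and "R_br sm br \<beta> a (b + c) j = R_br sm br \<beta> a b j + R_br sm br \<beta> a c j"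
    by (simp_all add: R_br_add_left[OF aN bN cN] R_br_add_right[OF aN bN cN])
  show "R_br sm br \<beta> (R_sc sm z a) b j = R_sc sm z (R_br sm br \<beta> a b j)"
    and "R_br sm br \<beta> a (R_sc sm z b) j = R_sc sm z (R_br sm br \<beta> a b j)"
    by (simp_all add: R_br_scale_left[OF aN bN] R_br_scale_right[OF aN bN])
  show "R_br sm br \<beta> (R_D a) b 0 = 0" and "R_br sm br \<beta> (R_D a) b (Suc j) = - R_br sm br \<beta> a b j"
    and "R_br sm br \<beta> a (R_D b) 0 = R_D (R_br sm br \<beta> a b 0)"
    and "R_br sm br \<beta> a (R_D b) (Suc j) = R_br sm br \<beta> a b j + R_D (R_br sm br \<beta> a b (Suc j))"
    by (simp_all add: R_br_R_D_left[OF aN bN] R_br_R_D_right[OF aN bN])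
  show "R_br sm br \<beta> a b j = - (\<Sum>i\<in>{i. R_br sm br \<beta> b a i \<noteq> 0}.
      R_sc sm ((-1) ^ i * of_nat (i choose j)) ((R_D ^^ (i - j)) (R_br sm br \<beta> b a i)))"
    by (subst R_br_skew[OF aN bN]) (rule refl)
  show "R_br sm br \<beta> a (R_br sm br \<beta> b c q) p = R_br sm br \<beta> b (R_br sm br \<beta> a c p) q
      + (\<Sum>j\<le>p. R_sc sm (of_nat ((p + q - j) choose q)) (R_br sm br \<beta> (R_br sm br \<beta> a b j) c (p + q - j)))"
    using R_br_jacobi[OF aN bN cN] by (metis (no_types))
qed (simp_all add: R.vector_space_axioms R_carrier_zero)

end

theorem proposition3p2:
  fixes sm :: "complex \<Rightarrow> 'a::ab_group_add \<Rightarrow> 'a"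
    and br :: "'a \<Rightarrow> 'a \<Rightarrow> 'a"
    and \<beta> :: complex
  assumes "complex_lie_algebra sm br"
  shows "lie_conformal_algebra R_carrier (R_sc sm) R_D (R_br sm br \<beta>)"
proof -
  interpret R_JIEF sm br \<beta>
    by (rule R_JIEF.intro) fact
  show ?thesis
    by (rule lie_conformal_algebra_R)
qed

end
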